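(* Let $\big(\mathscr N=V\oplus_{\perp}Z,[\cdot\,,\cdot],\langle\cdot\,,\cdot\rangle\big)$ be a general $H$-type algebra. Then there is an orthonormal basis $\{v_1,\ldots,v_m,z_1,\ldots,z_n\}$ of $V\oplus_{\perp}Z$, with $v_1,\ldots,v_m\in V$ and $z_1,\ldots,z_n\in Z$, such that $[v_\alpha,v_\beta]=\sum_{k=1}^{n}A^k_{\alpha\beta}z_k$ where every coefficient $A^k_{\alpha\beta}$ is equal to $1$, $-1$ or $0$.
   Context: A scalar product on a finite-dimensional real vector space is a real symmetric non-degenerate bilinear form (not necessarily positive definite). A basis $\{e_i\}$ is orthonormal for a scalar product if $\langle e_i,e_j\rangle=0$ for $i\neq j$ and $\langle e_i,e_i\rangle\in\{1,-1\}$. A general $H$-type algebra is a 2-step nilpotent real Lie algebra $\mathscr N$ with a scalar product $\langle\cdot\,,\cdot\rangle$ such that: (1) $\mathscr N=V\oplus_\perp Z$, where $Z$ is the center of $\mathscr N$, the restriction of $\langle\cdot\,,\cdot\rangle$ to $Z$ is non-degenerate, and $V$ is the orthogonal complement of $Z$; (2) the map $J\colon Z\to\mathrm{End}(V)$ defined by $\langle J_zu,v\rangle=\langle z,[u,v]\rangle$ for $z\in Z$, $u,v\in V$ satisfies $\langle J_zu,J_zv\rangle=\langle z,z\rangle\langle u,v\rangle$ for all $z\in Z$, $u,v\in V$. *)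

theory Defs
  imports "HOL-Analysis.Analysis"
begin

text \<open>A scalar product: real symmetric non-degenerate bilinear form
  (not necessarily positive definite).\<close>
definition scalar_product :: "('a::real_vector \<Rightarrow> 'a \<Rightarrow> real) \<Rightarrow> bool" where
  "scalar_product g \<longleftrightarrow> bilinear g \<and> (\<forall>x y. g x y = g y x)
      \<and> (\<forall>x. (\<forall>y. g x y = 0) \<longrightarrow> x = 0)"

definition lie_bracket :: "('a::real_vector \<Rightarrow> 'a \<Rightarrow> 'a) \<Rightarrow> bool" where
  "lie_bracket br \<longleftrightarrow> bilinear br \<and> (\<forall>x. br x x = 0)
      \<and> (\<forall>x y w. br x (br y w) + br y (br w x) + br w (br x y) = 0)"

definition two_step_nilpotent :: "('a::real_vector \<Rightarrow> 'a \<Rightarrow> 'a) \<Rightarrow> bool" where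
  "two_step_nilpotent br \<longleftrightarrow> (\<forall>x y w. br x (br y w) = 0) \<and> (\<exists>x y. br x y \<noteq> 0)"

definition lie_center :: "('a::real_vector \<Rightarrow> 'a \<Rightarrow> 'a) \<Rightarrow> 'a set" where
  "lie_center br = {z. \<forall>x. br z x = 0}"

definition orth_compl :: "('a::real_vector \<Rightarrow> 'a \<Rightarrow> real) \<Rightarrow> 'a set \<Rightarrow> 'a set" where
  "orth_compl g S = {v. \<forall>z\<in>S. g v z = 0}"

text \<open>The map J : Z \<rightarrow> End(V) is determined by
  g (J z u) v = g z [u,v] for u, v in V (unique by non-degeneracy of g on V).\<close>
definition general_H_type :: "('a::real_vector \<Rightarrow> 'a \<Rightarrow> 'a) \<Rightarrow> ('a \<Rightarrow> 'a \<Rightarrow> real) \<Rightarrow> bool" where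
  "general_H_type br g \<longleftrightarrow>
     (\<exists>B :: 'a set. finite B \<and> span B = UNIV) \<and>
     lie_bracket br \<and> two_step_nilpotent br \<and> scalar_product g \<and>
     (let Z = lie_center br; V = orth_compl g Z in
        (\<forall>z\<in>Z. (\<forall>w\<in>Z. g z w = 0) \<longrightarrow> z = 0) \<and>
        (\<forall>x. \<exists>v\<in>V. \<exists>z\<in>Z. x = v + z) \<and>
        (\<exists>J.
           (\<forall>z\<in>Z. \<forall>u\<in>V. J z u \<in> V \<and> (\<forall>v\<in>V. g (J z u) v = g z (br u v))) \<and>
           (\<forall>z\<in>Z. \<forall>u\<in>V. \<forall>v\<in>V. g (J z u) (J z v) = g z z * g u v)))"

definition orthonormal_basis :: "('a::real_vector \<Rightarrow> 'a \<Rightarrow> real) \<Rightarrow> (nat \<Rightarrow> 'a) \<Rightarrow> nat \<Rightarrow> bool" where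
  "orthonormal_basis g b N \<longleftrightarrow>
     inj_on b {..<N} \<and> independent (b ` {..<N}) \<and> span (b ` {..<N}) = UNIV \<and>
     (\<forall>i<N. \<forall>j<N. i \<noteq> j \<longrightarrow> g (b i) (b j) = 0) \<and>
     (\<forall>i<N. g (b i) (b i) = 1 \<or> g (b i) (b i) = -1)"

end

theory Submission
  imports Defs
begin

text \<open>Fix an orthonormal basis \<open>z\<^sub>1, \<dots>, z\<^sub>n\<close> of the centre. The operators \<open>J\<^sub>k = J\<^sub>z\<^sub>k\<close>
  on \<open>V\<close> are skew-adjoint, square to \<open>-\<langle>z\<^sub>k, z\<^sub>k\<rangle> = \<plusminus>1\<close> and anticommute, and the \<open>z\<^sub>k\<close>-coefficient of
  \<open>[u, w]\<close> is \<open>\<plusminus>\<langle>J\<^sub>k u, w\<rangle>\<close>. So it suffices to find an orthonormal basis of \<open>V\<close> that every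
  \<open>J\<^sub>k\<close> maps into itself up to signs.

  Call a vector \<open>v\<close> good if every product of \<open>J\<^sub>k\<close>'s maps it either to \<open>\<plusminus>v\<close> or to a vector
  orthogonal to \<open>v\<close>. The orbit of a good unit vector under all products is, up to signs,
  orthonormal and closed under the \<open>J\<^sub>k\<close>; its orthogonal complement in \<open>V\<close> is again invariant and
  nondegenerate, so repeating the step exhausts \<open>V\<close>. Good vectors exist by induction on the
  dimension: a self-adjoint involutive product \<open>P\<close> that is not \<open>\<plusminus>1\<close> lets us pass to its fixed
  space, keeping only the products commuting with \<open>P\<close>; if every such involution is \<open>\<plusminus>1\<close>, the
  products behaving like complex structures are pairwise proportional or anticommuting, and can be
  made isotropic one at a time by complex rotations \<open>v \<mapsto> a v + b K v\<close>.\<close>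

lemma bilinear_sum_left:
  assumes "bilinear g"
  shows "g (\<Sum>i\<in>S. f i) y = (\<Sum>i\<in>S. g (f i) y)"
proof -
  interpret l: linear "\<lambda>x. g x y" using assms by (simp add: bilinear_def)
  show ?thesis by (simp add: l.sum)
qed

lemma bilinear_sum_right:
  assumes "bilinear g"
  shows "g y (\<Sum>i\<in>S. f i) = (\<Sum>i\<in>S. g y (f i))"
proof -
  interpret l: linear "\<lambda>x. g y x" using assms by (simp add: bilinear_def)
  show ?thesis by (simp add: l.sum)
qed

definition is_sign :: "real \<Rightarrow> bool" where "is_sign s \<longleftrightarrow> s = 1 \<or> s = -1"

lemma is_sign_mult: "is_sign a \<Longrightarrow> is_sign b \<Longrightarrow> is_sign (a*b)" by (auto simp: is_sign_def)
lemma is_sign_sq: "is_sign a \<Longrightarrow> a * a = 1" by (auto simp: is_sign_def)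
lemma is_sign_neg: "is_sign a \<Longrightarrow> is_sign (-a)" by (auto simp: is_sign_def)
lemma is_sign_1: "is_sign 1" and is_sign_m1: "is_sign (-1)" by (auto simp: is_sign_def)
lemma is_sign_inv:
  fixes x y :: "'a::real_vector"
  shows "is_sign a \<Longrightarrow> y = a *\<^sub>R x \<Longrightarrow> x = a *\<^sub>R y"
  unfolding is_sign_def by (elim disjE) simp_all
lemma is_sign_pow: "is_sign ((-1)^k)" by (induct k) (auto simp: is_sign_def)

primrec word_op :: "(nat \<Rightarrow> 'a \<Rightarrow> 'a) \<Rightarrow> nat list \<Rightarrow> 'a \<Rightarrow> 'a" where
  "word_op J [] u = u"
| "word_op J (k#xs) u = J k (word_op J xs u)"

lemma word_op_append: "word_op J (xs @ ys) u = word_op J xs (word_op J ys u)"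
  by (induct xs) auto

fun toggle :: "nat \<Rightarrow> nat list \<Rightarrow> nat list" where
  "toggle k [] = [k]"
| "toggle k (y#ys) = (if k < y then k#y#ys else if k = y then ys else y # toggle k ys)"

lemma set_toggle_subset: "set (toggle k ys) \<subseteq> insert k (set ys)"
  by (induct ys) auto

lemma sorted_toggle: "sorted_wrt (<) ys \<Longrightarrow> sorted_wrt (<) (toggle k ys)"
proof (induct ys)
  case Nil then show ?case by simp
next
  case (Cons y ys)
  show ?case
  proof (cases "k < y")
    case True then show ?thesis using Cons by auto
  next
    case False
    then show ?thesis using Cons set_toggle_subset[of k ys] by (auto simp: not_less)
  qed
qed

lemma square_root_components: "\<exists>a b::real. a^2 - b^2 = N \<and> 2 * a * b = c"
proof -
  define w where "w = csqrt (Complex N c)"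
  have "w^2 = Complex N c" by (simp add: w_def)
  then have "Re (w^2) = N" "Im (w^2) = c" by simp_all
  then show ?thesis by (auto simp: Re_power2 Im_power2)
qed

definition orthonormal_set :: "('a::real_vector \<Rightarrow> 'a \<Rightarrow> real) \<Rightarrow> 'a set \<Rightarrow> bool" where
  "orthonormal_set g T \<longleftrightarrow>
     (\<forall>t\<in>T. g t t = 1 \<or> g t t = -1) \<and> (\<forall>s\<in>T. \<forall>t\<in>T. s \<noteq> t \<longrightarrow> g s t = 0)"

lemma orthonormal_set_subset: "orthonormal_set g T \<Longrightarrow> S \<subseteq> T \<Longrightarrow> orthonormal_set g S"
  by (auto simp: orthonormal_set_def)

lemma orthonormal_set_sum:
  assumes "bilinear g" "finite T" "orthonormal_set g T" "t' \<in> T"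
  shows "g (\<Sum>t\<in>T. c t *\<^sub>R t) t' = c t' * g t' t'"
proof -
  have "g (\<Sum>t\<in>T. c t *\<^sub>R t) t' = (\<Sum>t\<in>T. c t * g t t')"
    by (simp add: bilinear_sum_left[OF assms(1)] bilinear_lmul[OF assms(1)])
  also have "\<dots> = c t' * g t' t' + (\<Sum>t\<in>T - {t'}. c t * g t t')"
    using assms by (simp add: sum.remove)
  also have "(\<Sum>t\<in>T - {t'}. c t * g t t') = 0"
    using assms(3,4) by (intro sum.neutral) (auto simp: orthonormal_set_def)
  finally show ?thesis by simp
qed

lemma orthonormal_set_independent:
  assumes "bilinear g" "orthonormal_set g T"
  shows "independent T"
  unfolding real_vector.independent_explicit_finite_subsets
proof (intro allI impI ballI)
  fix S u v assume S: "S \<subseteq> T" "finite S" and su: "(\<Sum>v\<in>S. u v *\<^sub>R v) = 0" and v: "v \<in> S"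
  have oS: "orthonormal_set g S" using assms(2) S(1) by (rule orthonormal_set_subset)
  have "u v * g v v = 0"
    using orthonormal_set_sum[OF assms(1) S(2) oS v, of u] su bilinear_lzero[OF assms(1)] by simp
  moreover have "g v v \<noteq> 0" using oS v by (auto simp: orthonormal_set_def)
  ultimately show "u v = 0" by simp
qed

lemma orthonormal_set_card_le:
  fixes g :: "'a::real_vector \<Rightarrow> 'a \<Rightarrow> real" and B :: "'a set"
  assumes "bilinear g" "finite B" "span B = UNIV" "orthonormal_set g T"
  shows "finite T \<and> card T \<le> card B"
  using real_vector.independent_span_bound[OF assms(2) orthonormal_set_independent[OF assms(1,4)]]
    assms(3) by auto

lemma orthonormal_set_expansion:
  assumes "bilinear g" "finite T" "orthonormal_set g T" "w \<in> span T"
  shows "w = (\<Sum>t\<in>T. (g w t / g t t) *\<^sub>R t)"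
proof -
  obtain c where w: "w = (\<Sum>t\<in>T. c t *\<^sub>R t)"
    using assms(4) real_vector.span_finite[OF assms(2)] by blast
  have "c t = g w t / g t t" if t: "t \<in> T" for t
  proof -
    have "g w t = c t * g t t" unfolding w by (rule orthonormal_set_sum[OF assms(1-3) t])
    moreover have "g t t \<noteq> 0" using assms(3) t by (auto simp: orthonormal_set_def)
    ultimately show ?thesis by simp
  qed
  then show ?thesis unfolding w by (intro sum.cong) auto
qed

lemma orthonormal_set_orthogonal_disjoint:
  assumes "orthonormal_set g A" "\<forall>a\<in>A. \<forall>b\<in>B. g a b = 0"
  shows "A \<inter> B = {}"
  using assms by (force simp: orthonormal_set_def)

lemma orthonormal_set_orthogonal_Un:
  assumes "\<And>x y. g x y = g y x" "orthonormal_set g A" "orthonormal_set g B"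
    and "\<forall>a\<in>A. \<forall>b\<in>B. g a b = 0"
  shows "orthonormal_set g (A \<union> B)"
  using assms unfolding orthonormal_set_def by (metis Un_iff)

lemma orthonormal_basis_append:
  assumes "bilinear g" "orthonormal_set g (set vs \<union> set zs)" "distinct (vs @ zs)"
    and "span (set vs \<union> set zs) = UNIV"
  shows "orthonormal_basis g (\<lambda>i. if i < length vs then vs ! i else zs ! (i - length vs))
           (length vs + length zs)"
proof -
  let ?xs = "vs @ zs"
  have b: "(\<lambda>i. if i < length vs then vs ! i else zs ! (i - length vs)) = (!) ?xs"
    by (auto simp: nth_append)
  have img: "(!) ?xs ` {..<length ?xs} = set vs \<union> set zs"
    by (simp add: lessThan_atLeast0 nth_image)
  have inj: "inj_on ((!) ?xs) {..<length ?xs}"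
    using assms(3) by (simp add: inj_on_def nth_eq_iff_index_eq)
  have mem: "?xs ! i \<in> set vs \<union> set zs" if "i < length ?xs" for i
    using that by (metis nth_mem set_append)
  have "?xs ! i \<noteq> ?xs ! j" if "i < length ?xs" "j < length ?xs" "i \<noteq> j" for i j
    using inj_onD[OF inj] that by blast
  then show ?thesis
    unfolding orthonormal_basis_def b length_append[symmetric] img
    using inj orthonormal_set_independent[OF assms(1,2)] assms(2,4) mem
    by (simp add: orthonormal_set_def)
qed

definition sign_representatives :: "'a::real_vector set \<Rightarrow> 'a set" where
  "sign_representatives Q = (\<lambda>q. SOME p. p = q \<or> p = - q) ` Q"

lemma sign_representative: "(SOME p. p = q \<or> p = - q) = q \<or> (SOME p. p = q \<or> p = - q) = - q"
  by (rule someI[of _ q]) simp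

lemma sign_representatives_cover:
  "q \<in> Q \<Longrightarrow> \<exists>p\<in>sign_representatives Q. q = p \<or> q = - p"
  unfolding sign_representatives_def using sign_representative[of q] by force

lemma sign_representatives_cases:
  "p \<in> sign_representatives Q \<Longrightarrow> \<exists>q\<in>Q. p = q \<or> p = - q"
  unfolding sign_representatives_def using sign_representative by blast

lemma sign_representatives_orthonormal:
  assumes g: "bilinear g" and norm: "\<forall>q\<in>Q. g q q = 1 \<or> g q q = -1"
    and orth: "\<forall>q1\<in>Q. \<forall>q2\<in>Q. q2 = q1 \<or> q2 = - q1 \<or> g q1 q2 = 0"
  shows "orthonormal_set g (sign_representatives Q)"
  unfolding orthonormal_set_def
proof (intro conjI ballI impI)
  fix p assume "p \<in> sign_representatives Q"
  then obtain q where "q \<in> Q" "p = q \<or> p = - q" using sign_representatives_cases by blast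
  then show "g p p = 1 \<or> g p p = -1"
    using norm by (auto simp: bilinear_lneg[OF g] bilinear_rneg[OF g])
next
  fix p1 p2 assume p: "p1 \<in> sign_representatives Q" "p2 \<in> sign_representatives Q" "p1 \<noteq> p2"
  obtain q1 q2 where q: "q1 \<in> Q" "q2 \<in> Q"
    and p1: "p1 = (SOME p. p = q1 \<or> p = - q1)" and p2: "p2 = (SOME p. p = q2 \<or> p = - q2)"
    using p(1,2) by (auto simp: sign_representatives_def)
  have "q2 \<noteq> q1 \<and> q2 \<noteq> - q1" using p(3) by (auto simp: p1 p2 disj_commute)
  then have "g q1 q2 = 0" using orth q by blast
  then show "g p1 p2 = 0"
    using sign_representative[of q1] sign_representative[of q2]
    by (auto simp: p1 p2 bilinear_lneg[OF g] bilinear_rneg[OF g])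
qed

abbreviation append_closed :: "'a list set \<Rightarrow> bool" where
  "append_closed H \<equiv> \<forall>xs\<in>H. \<forall>ys\<in>H. xs @ ys \<in> H"

text \<open>\<open>J k\<close> stands for \<open>J\<^sub>z\<^sub>k\<close> for an orthonormal basis \<open>z\<^sub>0, \<dots>, z\<^sub>n\<^sub>-\<^sub>1\<close> of the centre, and
  \<open>eps k = \<langle>z\<^sub>k, z\<^sub>k\<rangle>\<close>. \<open>Bs\<close> is a finite spanning set of the whole space, used only to bound
  dimensions.\<close>

locale clifford_module =
  fixes g :: "'a::real_vector \<Rightarrow> 'a \<Rightarrow> real" and V :: "'a set" and n :: nat
    and J :: "nat \<Rightarrow> 'a \<Rightarrow> 'a" and eps :: "nat \<Rightarrow> real" and Bs :: "'a set"
  assumes finite_Bs: "finite Bs" and span_Bs: "span Bs = UNIV"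
    and bilinear_g: "bilinear g" and g_sym: "\<And>x y. g x y = g y x"
    and subspace_V: "subspace V"
    and nondegenerate_V: "\<And>x. x \<in> V \<Longrightarrow> (\<forall>y\<in>V. g x y = 0) \<Longrightarrow> x = 0"
    and J_in_V: "\<And>k u. k < n \<Longrightarrow> u \<in> V \<Longrightarrow> J k u \<in> V"
    and J_add: "\<And>k u w. k < n \<Longrightarrow> u \<in> V \<Longrightarrow> w \<in> V \<Longrightarrow> J k (u + w) = J k u + J k w"
    and J_scale: "\<And>k u c. k < n \<Longrightarrow> u \<in> V \<Longrightarrow> J k (c *\<^sub>R u) = c *\<^sub>R J k u"
    and J_skew: "\<And>k u w. k < n \<Longrightarrow> u \<in> V \<Longrightarrow> w \<in> V \<Longrightarrow> g (J k u) w = - g u (J k w)"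
    and J_square: "\<And>k u. k < n \<Longrightarrow> u \<in> V \<Longrightarrow> J k (J k u) = (- eps k) *\<^sub>R u"
    and sign_eps: "\<And>k. k < n \<Longrightarrow> is_sign (eps k)"
    and J_anticommute: "\<And>k l u. k < n \<Longrightarrow> l < n \<Longrightarrow> k \<noteq> l \<Longrightarrow> u \<in> V \<Longrightarrow>
      J k (J l u) = - J l (J k u)"
begin

lemmas g_simps = bilinear_ladd[OF bilinear_g] bilinear_radd[OF bilinear_g]
  bilinear_lmul[OF bilinear_g, simplified] bilinear_rmul[OF bilinear_g, simplified]
  bilinear_lneg[OF bilinear_g] bilinear_rneg[OF bilinear_g]
  bilinear_lsub[OF bilinear_g] bilinear_rsub[OF bilinear_g]
  bilinear_lzero[OF bilinear_g] bilinear_rzero[OF bilinear_g]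

lemmas zero_in_V = subspace_0[OF subspace_V]
lemmas add_in_V = subspace_add[OF subspace_V]
lemmas scale_in_V = subspace_scale[OF subspace_V]
lemmas diff_in_V = subspace_diff[OF subspace_V]

lemmas orthonormal_set_finite = orthonormal_set_card_le[OF bilinear_g finite_Bs span_Bs]

lemma J_neg: "k < n \<Longrightarrow> u \<in> V \<Longrightarrow> J k (- u) = - J k u"
  using J_scale[of k u "-1"] by simp

abbreviation is_word :: "nat list \<Rightarrow> bool" where "is_word xs \<equiv> set xs \<subseteq> {..<n}"

abbreviation nondegenerate_on :: "'a set \<Rightarrow> bool" where
  "nondegenerate_on U \<equiv> \<forall>x\<in>U. (\<forall>y\<in>U. g x y = 0) \<longrightarrow> x = 0"

abbreviation word_invariant :: "nat list set \<Rightarrow> 'a set \<Rightarrow> bool" where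
  "word_invariant H U \<equiv> \<forall>xs\<in>H. is_word xs \<and> (\<forall>w\<in>U. word_op J xs w \<in> U)"

lemma word_op_in: "is_word xs \<Longrightarrow> u \<in> V \<Longrightarrow> word_op J xs u \<in> V"
  by (induct xs) (auto intro: J_in_V)

lemma word_op_add:
  "is_word xs \<Longrightarrow> u \<in> V \<Longrightarrow> w \<in> V \<Longrightarrow> word_op J xs (u + w) = word_op J xs u + word_op J xs w"
  by (induct xs) (auto simp: J_add word_op_in)

lemma word_op_scale: "is_word xs \<Longrightarrow> u \<in> V \<Longrightarrow> word_op J xs (c *\<^sub>R u) = c *\<^sub>R word_op J xs u"
  by (induct xs) (auto simp: J_scale word_op_in)

lemma word_op_neg: "is_word xs \<Longrightarrow> u \<in> V \<Longrightarrow> word_op J xs (- u) = - word_op J xs u"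
  using word_op_scale[of xs u "-1"] by simp

lemma word_op_zero: "is_word xs \<Longrightarrow> word_op J xs 0 = 0"
  using word_op_scale[of xs 0 0] zero_in_V by simp

lemma word_op_adjoint: "is_word xs \<Longrightarrow> u \<in> V \<Longrightarrow> w \<in> V \<Longrightarrow>
   g (word_op J xs u) w = (-1)^length xs * g u (word_op J (rev xs) w)"
proof (induct xs arbitrary: w)
  case Nil then show ?case by simp
next
  case (Cons k xs)
  have "g (word_op J (k#xs) u) w = - g (word_op J xs u) (J k w)"
    using Cons by (simp add: J_skew word_op_in)
  also have "\<dots> = - ((-1)^length xs * g u (word_op J (rev xs) (J k w)))"
    using Cons by (simp add: J_in_V)
  also have "\<dots> = (-1)^length (k#xs) * g u (word_op J (rev (k#xs)) w)"
    by (simp add: word_op_append)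
  finally show ?case .
qed

lemma word_op_rev_inverse:
  "is_word xs \<Longrightarrow> \<exists>c. is_sign c \<and> (\<forall>u\<in>V. word_op J (rev xs) (word_op J xs u) = c *\<^sub>R u)"
proof (induct xs)
  case Nil then show ?case by (auto intro: is_sign_1)
next
  case (Cons k xs)
  then obtain c where c: "is_sign c" "\<forall>u\<in>V. word_op J (rev xs) (word_op J xs u) = c *\<^sub>R u" by auto
  have k: "k < n" using Cons by auto
  have "\<forall>u\<in>V. word_op J (rev (k#xs)) (word_op J (k#xs) u) = (- eps k * c) *\<^sub>R u"
  proof
    fix u assume u: "u \<in> V"
    have "word_op J (rev (k#xs)) (word_op J (k#xs) u) = word_op J (rev xs) (J k (J k (word_op J xs u)))"
      by (simp add: word_op_append)
    also have "\<dots> = word_op J (rev xs) ((- eps k) *\<^sub>R word_op J xs u)"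
      using k u Cons by (simp add: J_square word_op_in)
    also have "\<dots> = (- eps k) *\<^sub>R word_op J (rev xs) (word_op J xs u)"
      using Cons u by (intro word_op_scale word_op_in) auto
    also have "\<dots> = (- eps k) *\<^sub>R (c *\<^sub>R u)"
      using u c by simp
    finally show "word_op J (rev (k#xs)) (word_op J (k#xs) u) = (- eps k * c) *\<^sub>R u" by simp
  qed
  moreover have "is_sign (- eps k * c)" using sign_eps[OF k] c by (auto simp: is_sign_def)
  ultimately show ?case by blast
qed

lemma J_word_op_commute: "k < n \<Longrightarrow> is_word xs \<Longrightarrow>
   \<exists>s. is_sign s \<and> (\<forall>u\<in>V. J k (word_op J xs u) = s *\<^sub>R word_op J xs (J k u))"
proof (induct xs)
  case Nil then show ?case by (auto intro: is_sign_1)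
next
  case (Cons l xs)
  then obtain s where s: "is_sign s" "\<forall>u\<in>V. J k (word_op J xs u) = s *\<^sub>R word_op J xs (J k u)" by auto
  have l: "l < n" using Cons by auto
  define t where "t = (if k = l then 1 else -1::real)"
  have t: "\<forall>y\<in>V. J k (J l y) = t *\<^sub>R J l (J k y)"
    using J_anticommute[OF Cons(2) l] by (auto simp: t_def)
  have "\<forall>u\<in>V. J k (word_op J (l#xs) u) = (t * s) *\<^sub>R word_op J (l#xs) (J k u)"
  proof
    fix u assume u: "u \<in> V"
    have "J k (word_op J (l#xs) u) = t *\<^sub>R J l (J k (word_op J xs u))"
      using t Cons u by (simp add: word_op_in)
    also have "\<dots> = t *\<^sub>R J l (s *\<^sub>R word_op J xs (J k u))" using s u by simp
    also have "\<dots> = (t * s) *\<^sub>R word_op J (l#xs) (J k u)"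
      using l Cons u by (simp add: J_scale word_op_in J_in_V)
    finally show "J k (word_op J (l#xs) u) = (t * s) *\<^sub>R word_op J (l#xs) (J k u)" .
  qed
  moreover have "is_sign (t * s)" using s by (auto simp: is_sign_def t_def)
  ultimately show ?case by blast
qed

lemma word_op_commute: "is_word xs \<Longrightarrow> is_word ys \<Longrightarrow>
   \<exists>s. is_sign s \<and> (\<forall>u\<in>V. word_op J xs (word_op J ys u) = s *\<^sub>R word_op J ys (word_op J xs u))"
proof (induct xs)
  case Nil then show ?case by (auto intro: is_sign_1)
next
  case (Cons k xs)
  then obtain s where s: "is_sign s" "\<forall>u\<in>V. word_op J xs (word_op J ys u) = s *\<^sub>R word_op J ys (word_op J xs u)" by auto
  have k: "k < n" using Cons by auto
  obtain t where t: "is_sign t" "\<forall>u\<in>V. J k (word_op J ys u) = t *\<^sub>R word_op J ys (J k u)"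
    using J_word_op_commute[OF k Cons(3)] by auto
  have "\<forall>u\<in>V. word_op J (k#xs) (word_op J ys u) = (s * t) *\<^sub>R word_op J ys (word_op J (k#xs) u)"
  proof
    fix u assume u: "u \<in> V"
    have "word_op J (k#xs) (word_op J ys u) = J k (s *\<^sub>R word_op J ys (word_op J xs u))" using s u by simp
    also have "\<dots> = s *\<^sub>R J k (word_op J ys (word_op J xs u))"
      using k u Cons by (simp add: J_scale word_op_in)
    also have "\<dots> = s *\<^sub>R (t *\<^sub>R word_op J ys (J k (word_op J xs u)))"
      using t u Cons by (simp add: word_op_in)
    finally show "word_op J (k#xs) (word_op J ys u) = (s * t) *\<^sub>R word_op J ys (word_op J (k#xs) u)" by simp
  qed
  moreover have "is_sign (s * t)" by (rule is_sign_mult[OF s(1) t(1)])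
  ultimately show ?case by blast
qed

lemma word_op_rev: "is_word xs \<Longrightarrow> \<exists>s. is_sign s \<and> (\<forall>u\<in>V. word_op J (rev xs) u = s *\<^sub>R word_op J xs u)"
proof (induct xs)
  case Nil then show ?case by (auto intro: is_sign_1)
next
  case (Cons k xs)
  then obtain s where s: "is_sign s" "\<forall>u\<in>V. word_op J (rev xs) u = s *\<^sub>R word_op J xs u" by auto
  have k: "k < n" and xs: "is_word xs" using Cons by auto
  obtain t where t: "is_sign t" "\<forall>u\<in>V. J k (word_op J xs u) = t *\<^sub>R word_op J xs (J k u)"
    using J_word_op_commute[OF k xs] by auto
  have "\<forall>u\<in>V. word_op J (rev (k#xs)) u = (s * t) *\<^sub>R word_op J (k#xs) u"
  proof
    fix u assume u: "u \<in> V"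
    have "word_op J (rev (k#xs)) u = s *\<^sub>R word_op J xs (J k u)" using s u k by (simp add: word_op_append J_in_V)
    also have "word_op J xs (J k u) = t *\<^sub>R J k (word_op J xs u)"
      using t u is_sign_inv[OF t(1)] by blast
    finally show "word_op J (rev (k#xs)) u = (s * t) *\<^sub>R word_op J (k#xs) u" by simp
  qed
  moreover have "is_sign (s * t)" by (rule is_sign_mult[OF s(1) t(1)])
  ultimately show ?case by blast
qed

lemma word_op_adjoint_sign: "is_word xs \<Longrightarrow>
   \<exists>s. is_sign s \<and> (\<forall>u\<in>V. \<forall>w\<in>V. g (word_op J xs u) w = s * g u (word_op J xs w))"
proof -
  assume xs: "is_word xs"
  obtain s where s: "is_sign s" "\<forall>u\<in>V. word_op J (rev xs) u = s *\<^sub>R word_op J xs u" using word_op_rev[OF xs] by auto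
  have "\<forall>u\<in>V. \<forall>w\<in>V. g (word_op J xs u) w = ((-1)^length xs * s) * g u (word_op J xs w)"
    using word_op_adjoint[OF xs] s by (simp add: g_simps)
  moreover have "is_sign ((-1)^length xs * s)" by (rule is_sign_mult[OF is_sign_pow s(1)])
  ultimately show ?thesis by blast
qed

lemma word_op_square: "is_word xs \<Longrightarrow> \<exists>s. is_sign s \<and> (\<forall>u\<in>V. word_op J xs (word_op J xs u) = s *\<^sub>R u)"
proof -
  assume xs: "is_word xs"
  obtain s where s: "is_sign s" "\<forall>u\<in>V. word_op J (rev xs) u = s *\<^sub>R word_op J xs u" using word_op_rev[OF xs] by auto
  obtain c where c: "is_sign c" "\<forall>u\<in>V. word_op J (rev xs) (word_op J xs u) = c *\<^sub>R u" using word_op_rev_inverse[OF xs] by auto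
  have "\<forall>u\<in>V. word_op J xs (word_op J xs u) = (s * c) *\<^sub>R u"
  proof
    fix u assume u: "u \<in> V"
    have "word_op J (rev xs) (word_op J xs u) = s *\<^sub>R word_op J xs (word_op J xs u)" using s u xs word_op_in by blast
    then have "word_op J xs (word_op J xs u) = s *\<^sub>R (c *\<^sub>R u)" using c u is_sign_inv[OF s(1)] by metis
    then show "word_op J xs (word_op J xs u) = (s * c) *\<^sub>R u" by simp
  qed
  moreover have "is_sign (s * c)" by (rule is_sign_mult[OF s(1) c(1)])
  ultimately show ?thesis by blast
qed

lemma J_word_op_toggle: "k < n \<Longrightarrow> sorted_wrt (<) ys \<Longrightarrow> is_word ys \<Longrightarrow>
   \<exists>s. is_sign s \<and> (\<forall>u\<in>V. J k (word_op J ys u) = s *\<^sub>R word_op J (toggle k ys) u)"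
proof (induct ys)
  case Nil then show ?case by (auto intro: is_sign_1)
next
  case (Cons y ys)
  have y: "y < n" using Cons by auto
  show ?case
  proof (cases "k < y")
    case True then show ?thesis by (auto intro: is_sign_1)
  next
    case False
    show ?thesis
    proof (cases "k = y")
      case True
      have "\<forall>u\<in>V. J k (word_op J (y#ys) u) = (- eps k) *\<^sub>R word_op J (toggle k (y#ys)) u"
        using True Cons by (simp add: J_square word_op_in)
      then show ?thesis using sign_eps[OF Cons(2)] is_sign_neg by blast
    next
      case False2: False
      then obtain s where s: "is_sign s" "\<forall>u\<in>V. J k (word_op J ys u) = s *\<^sub>R word_op J (toggle k ys) u"
        using Cons by auto
      have "\<forall>u\<in>V. J k (word_op J (y#ys) u) = (-s) *\<^sub>R word_op J (toggle k (y#ys)) u"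
      proof
        fix u assume u: "u \<in> V"
        have tin: "word_op J (toggle k ys) u \<in> V"
          using set_toggle_subset[of k ys] Cons u by (intro word_op_in) auto
        have "J k (word_op J (y#ys) u) = - J y (J k (word_op J ys u))"
          using J_anticommute[OF Cons(2) y False2] Cons u by (simp add: word_op_in)
        also have "\<dots> = - J y (s *\<^sub>R word_op J (toggle k ys) u)" using s u by simp
        also have "\<dots> = (-s) *\<^sub>R word_op J (toggle k (y#ys)) u"
          using y tin False False2 by (simp add: J_scale)
        finally show "J k (word_op J (y#ys) u) = (-s) *\<^sub>R word_op J (toggle k (y#ys)) u" .
      qed
      then show ?thesis using is_sign_neg[OF s(1)] by blast
    qed
  qed
qed

definition sorted_words :: "nat list set" where "sorted_words = {ys. sorted_wrt (<) ys \<and> is_word ys}"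

lemma finite_sorted_words: "finite sorted_words"
proof -
  have "sorted_words \<subseteq> {xs. set xs \<subseteq> {..<n} \<and> length xs \<le> n}"
  proof
    fix ys assume "ys \<in> sorted_words"
    then have d: "distinct ys" and s: "set ys \<subseteq> {..<n}" by (auto simp: sorted_words_def strict_sorted_iff)
    have "length ys = card (set ys)" using distinct_card[OF d] by simp
    also have "\<dots> \<le> card {..<n}" using s by (intro card_mono) auto
    finally show "ys \<in> {xs. set xs \<subseteq> {..<n} \<and> length xs \<le> n}" using s by simp
  qed
  then show ?thesis using finite_lists_length_le[of "{..<n}" n] finite_subset by blast
qed

lemma word_op_normal_form: "is_word xs \<Longrightarrow>
   \<exists>ys\<in>sorted_words. \<exists>s. is_sign s \<and> (\<forall>u\<in>V. word_op J xs u = s *\<^sub>R word_op J ys u)"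
proof (induct xs)
  case Nil
  have "[] \<in> sorted_words" by (simp add: sorted_words_def)
  moreover have "\<forall>u\<in>V. word_op J [] u = 1 *\<^sub>R word_op J [] u" by simp
  ultimately show ?case using is_sign_1 by blast
next
  case (Cons k xs)
  then obtain ys s where ys: "ys \<in> sorted_words" "is_sign s" "\<forall>u\<in>V. word_op J xs u = s *\<^sub>R word_op J ys u" by auto
  have k: "k < n" using Cons by auto
  have ysn: "sorted_wrt (<) ys" "is_word ys" using ys(1) by (auto simp: sorted_words_def)
  obtain t where t: "is_sign t" "\<forall>u\<in>V. J k (word_op J ys u) = t *\<^sub>R word_op J (toggle k ys) u"
    using J_word_op_toggle[OF k ysn] by auto
  have "toggle k ys \<in> sorted_words" using ys(1) sorted_toggle set_toggle_subset[of k ys] k by (auto simp: sorted_words_def)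
  moreover have "\<forall>u\<in>V. word_op J (k#xs) u = (s * t) *\<^sub>R word_op J (toggle k ys) u"
  proof
    fix u assume u: "u \<in> V"
    have "word_op J (k#xs) u = J k (s *\<^sub>R word_op J ys u)" using ys u by simp
    also have "\<dots> = s *\<^sub>R J k (word_op J ys u)" using k u ys(1) by (simp add: J_scale word_op_in sorted_words_def)
    finally show "word_op J (k#xs) u = (s * t) *\<^sub>R word_op J (toggle k ys) u" using t u by simp
  qed
  ultimately show ?case using is_sign_mult[OF ys(2) t(1)] by blast
qed

lemma dim_strict_subspace:
  fixes E U :: "'a set"
  assumes "subspace E" "subspace U" "E \<subseteq> U" "w \<in> U" "w \<notin> E"
  shows "real_vector.dim E < real_vector.dim U"
proof -
  obtain B where B: "B \<subseteq> Bs" "independent B" "Bs \<subseteq> span B"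
    using real_vector.maximal_independent_subset[of Bs] by blast
  have spB: "span B = UNIV"
    using B(3) span_Bs by (metis real_vector.span_mono real_vector.span_span top.extremum_unique)
  have fB: "finite B" using B(1) finite_Bs finite_subset by blast
  interpret fd: finite_dimensional_vector_space "scaleR :: real \<Rightarrow> 'a \<Rightarrow> 'a" B
    by unfold_locales (use fB B(2) spB in \<open>auto simp: dependent_raw_def span_raw_def\<close>)
  have "span E \<subset> span U"
    using assms real_vector.span_eq_iff by blast
  then show ?thesis using fd.dim_psubset[of E U] by (simp add: dim_raw_def span_raw_def)
qed

lemma nondegenerate_exists_non_null:
  assumes "subspace U" "nondegenerate_on U" "w \<in> U" "w \<noteq> 0"
  shows "\<exists>v\<in>U. g v v \<noteq> 0"
proof (rule ccontr)
  assume "\<not> ?thesis"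
  then have z: "\<forall>v\<in>U. g v v = 0" by auto
  obtain u where u: "u \<in> U" "g w u \<noteq> 0" using assms by blast
  have "w + u \<in> U" using assms(1,3) u(1) by (rule subspace_add)
  then have "g (w + u) (w + u) = 0" using z by blast
  then have "g w u + g u w = 0" using z assms(3) u(1) by (simp add: g_simps)
  then show False using u(2) g_sym[of u w] by simp
qed

definition self_adjoint_word :: "nat list \<Rightarrow> bool" where
  "self_adjoint_word xs \<longleftrightarrow> (\<forall>u\<in>V. \<forall>w\<in>V. g (word_op J xs u) w = g u (word_op J xs w))"

text \<open>The orbit of a good unit vector under all words is orthonormal up to signs.\<close>

definition good_vector :: "'a \<Rightarrow> nat list set \<Rightarrow> bool" where
  "good_vector v H \<longleftrightarrow>
     (\<forall>xs\<in>H. (\<exists>s. is_sign s \<and> word_op J xs v = s *\<^sub>R v) \<or> g (word_op J xs v) v = 0)"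

lemma anticommuting_word_rotation:
  assumes ys: "is_word ys" "self_adjoint_word ys" "\<forall>u\<in>V. word_op J ys (word_op J ys u) = - u"
    and zs: "is_word zs" "\<forall>u\<in>V. word_op J ys (word_op J zs u) = - word_op J zs (word_op J ys u)"
    and vV: "v \<in> V"
  shows "g (word_op J zs (a *\<^sub>R v + b *\<^sub>R word_op J ys v)) (a *\<^sub>R v + b *\<^sub>R word_op J ys v) =
           (a\<^sup>2 + b\<^sup>2) * g (word_op J zs v) v"
proof -
  define K where "K = word_op J ys"
  define K' where "K' = word_op J zs"
  have KvV: "K v \<in> V" using word_op_in[OF ys(1) vV] by (simp add: K_def)
  have KKv: "K (K v) = - v" using ys(3) vV by (simp add: K_def)
  have symK: "\<And>u w. u \<in> V \<Longrightarrow> w \<in> V \<Longrightarrow> g (K u) w = g u (K w)"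
    using ys(2) by (simp add: self_adjoint_word_def K_def)
  have anti: "\<And>u. u \<in> V \<Longrightarrow> K (K' u) = - K' (K u)" using zs(2) by (simp add: K_def K'_def)
  have K'vV: "K' v \<in> V" and K'KvV: "K' (K v) \<in> V"
    using word_op_in[OF zs(1) vV] word_op_in[OF zs(1) KvV] by (simp_all add: K'_def)
  have f1: "g (K' v) (K v) = - g (K' (K v)) v"
    using symK[OF K'vV vV] anti[OF vV] by (simp add: g_simps)
  have "g (K' (K v)) (K v) = g (K (K' (K v))) v" using symK[OF K'KvV vV] by simp
  also have "K (K' (K v)) = - K' (K (K v))" using anti[OF KvV] .
  also have "K' (K (K v)) = - K' v" using KKv word_op_neg[OF zs(1) vV] by (simp add: K'_def)
  finally have f2: "g (K' (K v)) (K v) = g (K' v) v" by simp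
  have "K' (a *\<^sub>R v + b *\<^sub>R K v) = a *\<^sub>R K' v + b *\<^sub>R K' (K v)"
    unfolding K'_def using zs(1) vV KvV by (simp add: word_op_add word_op_scale scale_in_V)
  then show ?thesis
    unfolding K_def[symmetric] K'_def[symmetric]
    by (simp add: g_simps f1 f2 algebra_simps power2_eq_square)
qed

text \<open>Think of \<open>K\<close> as multiplication by \<open>i\<close>: with \<open>(a + i b)\<^sup>2 = N + i c\<close>, where
  \<open>N = g v v\<close> and \<open>c = g (K v) v\<close>, the vector \<open>v' = a v + b K v\<close> has
  \<open>g v' v' = N\<^sup>2 + c\<^sup>2\<close> and \<open>g (K v') v' = 0\<close>.\<close>

lemma rotation_to_K_isotropic:
  assumes sU: "subspace U" and UV: "U \<subseteq> V"
    and ys: "is_word ys" "self_adjoint_word ys" "\<forall>u\<in>V. word_op J ys (word_op J ys u) = - u"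
      "\<forall>w\<in>U. word_op J ys w \<in> U"
    and v: "v \<in> U" "g v v \<noteq> 0"
  shows "\<exists>v'\<in>U. g v' v' \<noteq> 0 \<and> g (word_op J ys v') v' = 0 \<and>
     (\<forall>zs. is_word zs \<and> (\<forall>u\<in>V. word_op J ys (word_op J zs u) = - word_op J zs (word_op J ys u)) \<and>
        g (word_op J zs v) v = 0 \<longrightarrow> g (word_op J zs v') v' = 0)"
proof -
  define K where "K = word_op J ys"
  define N where "N = g v v"
  define c where "c = g (K v) v"
  obtain a b where ab: "a\<^sup>2 - b\<^sup>2 = N" "2 * a * b = c" using square_root_components by blast
  have vV: "v \<in> V" using v UV by auto
  have KvV: "K v \<in> V" using word_op_in[OF ys(1) vV] by (simp add: K_def)
  have KKv: "K (K v) = - v" using ys(3) vV by (simp add: K_def)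
  have e1: "g (K v) (K v) = - N"
    using ys(2) vV KvV KKv by (simp add: N_def g_simps self_adjoint_word_def K_def)
  have e2: "g v (K v) = c" using g_sym by (simp add: c_def)
  define v' where "v' = a *\<^sub>R v + b *\<^sub>R K v"
  have v'U: "v' \<in> U" unfolding v'_def
    using sU v(1) ys(4) by (simp add: K_def subspace_add subspace_scale)
  have Kv': "K v' = a *\<^sub>R K v - b *\<^sub>R v"
    unfolding v'_def K_def using ys(1) vV KvV KKv
    by (simp add: word_op_add word_op_scale scale_in_V K_def)
  have "g v' v' = (a\<^sup>2 - b\<^sup>2) * N + 2 * a * b * c"
    unfolding v'_def
    by (simp add: g_simps e1 e2 c_def[symmetric] N_def[symmetric] algebra_simps power2_eq_square)
  also have "\<dots> = N\<^sup>2 + c\<^sup>2" using ab by (simp add: power2_eq_square)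
  finally have "g v' v' \<noteq> 0" using v(2) by (simp add: N_def add_nonneg_eq_0_iff)
  moreover have "g (K v') v' = (a\<^sup>2 - b\<^sup>2) * c - 2 * a * b * N"
    unfolding Kv' unfolding v'_def
    by (simp add: g_simps e1 e2 c_def[symmetric] N_def[symmetric] algebra_simps power2_eq_square)
  then have "g (K v') v' = 0" using ab by simp
  moreover have "g (word_op J zs v') v' = 0"
    if "is_word zs" "\<forall>u\<in>V. word_op J ys (word_op J zs u) = - word_op J zs (word_op J ys u)"
      "g (word_op J zs v) v = 0" for zs
    using anticommuting_word_rotation[OF ys(1-3) that(1,2) vV, of a b] that(3)
    by (simp add: v'_def K_def)
  ultimately show ?thesis using v'U by (auto simp: K_def)
qed

abbreviation involution_word :: "nat list \<Rightarrow> bool" where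
  "involution_word P \<equiv> self_adjoint_word P \<and> (\<forall>u\<in>V. word_op J P (word_op J P u) = u)"

text \<open>The words that still have to be made isotropic when every involution of \<open>H\<close> is scalar.\<close>

definition complex_word :: "nat list set \<Rightarrow> nat list \<Rightarrow> bool" where
  "complex_word H ys \<longleftrightarrow> is_word ys \<and> self_adjoint_word ys \<and>
     (\<forall>u\<in>V. word_op J ys (word_op J ys u) = - u) \<and>
     (\<exists>xs\<in>H. \<exists>s. is_sign s \<and> (\<forall>u\<in>V. word_op J xs u = s *\<^sub>R word_op J ys u))"

lemma complex_word_preserves:
  assumes "subspace U" "U \<subseteq> V" "word_invariant H U" "complex_word H ys" "w \<in> U"
  shows "word_op J ys w \<in> U"
proof -
  obtain xs s where xs: "xs \<in> H" "is_sign s" "\<forall>u\<in>V. word_op J xs u = s *\<^sub>R word_op J ys u"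
    using assms(4) by (auto simp: complex_word_def)
  have "word_op J ys w = s *\<^sub>R word_op J xs w" using xs assms(2,5) is_sign_inv[OF xs(2)] by blast
  then show ?thesis using assms(1,3,5) xs(1) by (simp add: subspace_scale)
qed

lemma involution_word_of_sign_multiple:
  assumes xs: "is_word xs" and ys: "is_word ys" "self_adjoint_word ys"
    "\<forall>u\<in>V. word_op J ys (word_op J ys u) = u"
    and s: "is_sign s" "\<forall>u\<in>V. word_op J xs u = s *\<^sub>R word_op J ys u"
  shows "involution_word xs"
proof
  show "self_adjoint_word xs"
    using s(2) ys(2) unfolding self_adjoint_word_def by (simp add: g_simps)
  show "\<forall>u\<in>V. word_op J xs (word_op J xs u) = u"
  proof
    fix u assume u: "u \<in> V"
    have "word_op J xs (word_op J xs u) = s *\<^sub>R word_op J ys (s *\<^sub>R word_op J ys u)"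
      using s(2) u word_op_in[OF xs u] by simp
    also have "\<dots> = (s * s) *\<^sub>R word_op J ys (word_op J ys u)"
      using word_op_scale[OF ys(1)] word_op_in[OF ys(1) u] by simp
    also have "\<dots> = u" using is_sign_sq[OF s(1)] ys(3) u by simp
    finally show "word_op J xs (word_op J xs u) = u" .
  qed
qed

lemma commuting_complex_words_involution:
  assumes y0: "complex_word H y0" and y1: "complex_word H y1"
    and comm: "\<forall>u\<in>V. word_op J y0 (word_op J y1 u) = word_op J y1 (word_op J y0 u)"
  shows "involution_word (y0 @ y1)"
proof
  define K where "K = word_op J y0"
  define K' where "K' = word_op J y1"
  have y0W: "is_word y0" and y1W: "is_word y1" using y0 y1 by (auto simp: complex_word_def)
  have KV: "\<And>u. u \<in> V \<Longrightarrow> K u \<in> V" and K'V: "\<And>u. u \<in> V \<Longrightarrow> K' u \<in> V"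
    using word_op_in[OF y0W] word_op_in[OF y1W] by (simp_all add: K_def K'_def)
  have KK: "\<And>u. u \<in> V \<Longrightarrow> K (K u) = - u" and K'K': "\<And>u. u \<in> V \<Longrightarrow> K' (K' u) = - u"
    using y0 y1 by (simp_all add: complex_word_def K_def K'_def)
  have sK: "\<And>u w. u \<in> V \<Longrightarrow> w \<in> V \<Longrightarrow> g (K u) w = g u (K w)"
    and sK': "\<And>u w. u \<in> V \<Longrightarrow> w \<in> V \<Longrightarrow> g (K' u) w = g u (K' w)"
    using y0 y1 by (simp_all add: complex_word_def K_def K'_def self_adjoint_word_def)
  have comm': "\<And>u. u \<in> V \<Longrightarrow> K (K' u) = K' (K u)" using comm by (simp add: K_def K'_def)
  have KK'_eq: "word_op J (y0 @ y1) u = K (K' u)" for u by (simp add: word_op_append K_def K'_def)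
  show "self_adjoint_word (y0 @ y1)"
    unfolding self_adjoint_word_def KK'_eq
  proof (intro ballI)
    fix u w assume u: "u \<in> V" and w: "w \<in> V"
    have "g (K (K' u)) w = g (K' u) (K w)" using sK[OF K'V[OF u] w] .
    also have "\<dots> = g u (K' (K w))" using sK'[OF u KV[OF w]] .
    finally show "g (K (K' u)) w = g u (K (K' w))" using comm'[OF w] by simp
  qed
  show "\<forall>u\<in>V. word_op J (y0 @ y1) (word_op J (y0 @ y1) u) = u"
    unfolding KK'_eq
  proof
    fix u assume u: "u \<in> V"
    have "K (K' (K (K' u))) = K (K (K' (K' u)))" using comm'[OF K'V[OF u]] by simp
    also have "\<dots> = u" using KK[OF K'V[OF K'V[OF u]]] K'K'[OF u] by simp
    finally show "K (K' (K (K' u))) = u" .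
  qed
qed

lemma commuting_complex_words_product:
  assumes HW: "\<forall>xs\<in>H. is_word xs" and Hc: "append_closed H"
    and y0: "complex_word H y0" and y1: "complex_word H y1"
    and comm: "\<forall>u\<in>V. word_op J y0 (word_op J y1 u) = word_op J y1 (word_op J y0 u)"
  shows "\<exists>P\<in>H. \<exists>s. is_sign s \<and> involution_word P \<and>
           (\<forall>u\<in>V. word_op J P u = s *\<^sub>R word_op J y0 (word_op J y1 u))"
proof -
  have y0W: "is_word y0" and y1W: "is_word y1" using y0 y1 by (auto simp: complex_word_def)
  obtain xs0 s0 where x0: "xs0 \<in> H" "is_sign s0" "\<forall>u\<in>V. word_op J xs0 u = s0 *\<^sub>R word_op J y0 u"
    using y0 by (auto simp: complex_word_def)
  obtain xs1 s1 where x1: "xs1 \<in> H" "is_sign s1" "\<forall>u\<in>V. word_op J xs1 u = s1 *\<^sub>R word_op J y1 u"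
    using y1 by (auto simp: complex_word_def)
  have P_eq: "\<forall>u\<in>V. word_op J (xs0 @ xs1) u = (s0 * s1) *\<^sub>R word_op J (y0 @ y1) u"
    using x0(3) x1(3) word_op_in[OF y1W] word_op_scale[OF y0W]
    by (simp add: word_op_append scale_in_V)
  have "involution_word (xs0 @ xs1)"
    using involution_word_of_sign_multiple[OF _ _ _ _ is_sign_mult[OF x0(2) x1(2)] P_eq]
      commuting_complex_words_involution[OF y0 y1 comm] HW x0(1) x1(1) y0W y1W by auto
  moreover have "xs0 @ xs1 \<in> H" using Hc x0(1) x1(1) by simp
  moreover have "\<forall>u\<in>V. word_op J (xs0 @ xs1) u = (s0 * s1) *\<^sub>R word_op J y0 (word_op J y1 u)"
    using P_eq by (simp add: word_op_append)
  ultimately show ?thesis using is_sign_mult[OF x0(2) x1(2)] by blast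
qed

text \<open>The product of the two words is an involution of \<open>H\<close>, hence scalar on \<open>U\<close>.\<close>

lemma commuting_complex_words_proportional:
  assumes UV: "U \<subseteq> V" and HW: "\<forall>xs\<in>H. is_word xs" and Hc: "append_closed H"
    and scalar: "\<forall>P\<in>H. involution_word P \<longrightarrow>
                   (\<forall>w\<in>U. word_op J P w = w) \<or> (\<forall>w\<in>U. word_op J P w = - w)"
    and y0: "complex_word H y0" and y1: "complex_word H y1"
    and comm: "\<forall>u\<in>V. word_op J y0 (word_op J y1 u) = word_op J y1 (word_op J y0 u)"
  shows "\<exists>\<tau>. \<forall>w\<in>U. word_op J y1 w = \<tau> *\<^sub>R word_op J y0 w"
proof -
  obtain P s where P: "P \<in> H" "is_sign s" "involution_word P"
    "\<forall>u\<in>V. word_op J P u = s *\<^sub>R word_op J y0 (word_op J y1 u)"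
    using commuting_complex_words_product[OF HW Hc y0 y1 comm] by blast
  obtain \<sigma> where \<sigma>: "\<forall>w\<in>U. word_op J P w = \<sigma> *\<^sub>R w"
    using scalar P(1,3) by (metis scaleR_minus1_left scaleR_one)
  have y0W: "is_word y0" and y1W: "is_word y1" using y0 y1 by (auto simp: complex_word_def)
  have "word_op J y1 w = (- s * \<sigma>) *\<^sub>R word_op J y0 w" if w: "w \<in> U" for w
  proof -
    have wV: "w \<in> V" using w UV by auto
    have "s *\<^sub>R word_op J y0 (word_op J y1 w) = word_op J P w" using P(4) wV by simp
    also have "\<dots> = \<sigma> *\<^sub>R w" using \<sigma> w by simp
    finally have "word_op J y0 (word_op J y1 w) = (s * \<sigma>) *\<^sub>R w"
      using is_sign_inv[OF P(2)] by (metis scaleR_scaleR)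
    then have "word_op J y0 (word_op J y0 (word_op J y1 w)) = (s * \<sigma>) *\<^sub>R word_op J y0 w"
      using word_op_scale[OF y0W wV] by simp
    moreover have "word_op J y0 (word_op J y0 (word_op J y1 w)) = - word_op J y1 w"
      using y0 word_op_in[OF y1W wV] by (simp add: complex_word_def)
    ultimately show ?thesis by (metis minus_minus scaleR_minus_left mult_minus_left)
  qed
  then show ?thesis by blast
qed

lemma complex_words_common_isotropic_vector:
  assumes sU: "subspace U" and UV: "U \<subseteq> V" and ndU: "nondegenerate_on U"
    and nzU: "\<exists>w\<in>U. w \<noteq> 0" and HU: "word_invariant H U" and Hc: "append_closed H"
    and scalar: "\<forall>P\<in>H. involution_word P \<longrightarrow>
                   (\<forall>w\<in>U. word_op J P w = w) \<or> (\<forall>w\<in>U. word_op J P w = - w)"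
    and F: "finite F" "\<forall>ys\<in>F. complex_word H ys"
  shows "\<exists>v\<in>U. g v v \<noteq> 0 \<and> (\<forall>ys\<in>F. g (word_op J ys v) v = 0)"
  using F
proof (induction F rule: finite_induct)
  case empty
  then show ?case using nondegenerate_exists_non_null[OF sU ndU] nzU by auto
next
  case (insert y0 F)
  then obtain v where v: "v \<in> U" "g v v \<noteq> 0" "\<forall>ys\<in>F. g (word_op J ys v) v = 0" by auto
  have y0: "complex_word H y0" using insert.prems by simp
  then have y0W: "is_word y0" by (simp add: complex_word_def)
  obtain v' where v': "v' \<in> U" "g v' v' \<noteq> 0" "g (word_op J y0 v') v' = 0"
    "\<forall>zs. is_word zs \<and> (\<forall>u\<in>V. word_op J y0 (word_op J zs u) = - word_op J zs (word_op J y0 u)) \<and>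
        g (word_op J zs v) v = 0 \<longrightarrow> g (word_op J zs v') v' = 0"
    using rotation_to_K_isotropic[OF sU UV y0W _ _ _ v(1,2)] y0 complex_word_preserves[OF sU UV HU y0]
    by (auto simp: complex_word_def)
  have "g (word_op J y1 v') v' = 0" if y1: "y1 \<in> F" for y1
  proof -
    have y1C: "complex_word H y1" using insert.prems y1 by simp
    then have y1W: "is_word y1" by (simp add: complex_word_def)
    obtain t where t: "is_sign t"
      "\<forall>u\<in>V. word_op J y0 (word_op J y1 u) = t *\<^sub>R word_op J y1 (word_op J y0 u)"
      using word_op_commute[OF y0W y1W] by blast
    show ?thesis
    proof (cases "t = 1")
      case True
      then obtain \<tau> where "\<forall>w\<in>U. word_op J y1 w = \<tau> *\<^sub>R word_op J y0 w"
        using commuting_complex_words_proportional[OF UV _ Hc scalar y0 y1C] HU t by auto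
      then show ?thesis using v'(1,3) by (simp add: g_simps)
    next
      case False
      then have "\<forall>u\<in>V. word_op J y0 (word_op J y1 u) = - word_op J y1 (word_op J y0 u)"
        using t by (simp add: is_sign_def)
      then show ?thesis using v'(4) y1W v(3) y1 by blast
    qed
  qed
  then show ?case using v' by blast
qed

lemma sign_multiple_word_cases:
  assumes xs: "xs \<in> H" "is_word xs" and ys: "is_word ys"
    and s: "is_sign s" "\<forall>u\<in>V. word_op J xs u = s *\<^sub>R word_op J ys u"
  shows "(\<forall>u\<in>V. g (word_op J ys u) u = 0) \<or> involution_word xs \<or> complex_word H ys"
proof -
  obtain t where t: "is_sign t" "\<forall>u\<in>V. \<forall>w\<in>V. g (word_op J ys u) w = t * g u (word_op J ys w)"
    using word_op_adjoint_sign[OF ys] by blast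
  obtain r where r: "is_sign r" "\<forall>u\<in>V. word_op J ys (word_op J ys u) = r *\<^sub>R u"
    using word_op_square[OF ys] by blast
  show ?thesis
  proof (cases "t = 1")
    case False
    then have "t = -1" using t(1) by (simp add: is_sign_def)
    then have "g (word_op J ys u) u = 0" if "u \<in> V" for u
      using t(2) that g_sym[of u "word_op J ys u"] by simp
    then show ?thesis by blast
  next
    case True
    then have sa: "self_adjoint_word ys" using t by (simp add: self_adjoint_word_def)
    show ?thesis
    proof (cases "r = 1")
      case True
      then show ?thesis using involution_word_of_sign_multiple[OF xs(2) ys sa _ s] r by simp
    next
      case False
      then have "r = -1" using r(1) by (simp add: is_sign_def)
      then have "complex_word H ys" unfolding complex_word_def using r(2) xs(1) ys sa s by auto
      then show ?thesis by blast
    qed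
  qed
qed

lemma good_vector_if_involutions_scalar:
  assumes sU: "subspace U" and UV: "U \<subseteq> V" and ndU: "nondegenerate_on U"
    and nzU: "\<exists>w\<in>U. w \<noteq> 0" and HU: "word_invariant H U" and Hc: "append_closed H"
    and scalar: "\<forall>P\<in>H. involution_word P \<longrightarrow>
                   (\<forall>w\<in>U. word_op J P w = w) \<or> (\<forall>w\<in>U. word_op J P w = - w)"
  shows "\<exists>v\<in>U. g v v \<noteq> 0 \<and> good_vector v H"
proof -
  have "finite {ys\<in>sorted_words. complex_word H ys}" using finite_sorted_words by simp
  then obtain v where v: "v \<in> U" "g v v \<noteq> 0"
    and iso: "\<forall>ys\<in>sorted_words. complex_word H ys \<longrightarrow> g (word_op J ys v) v = 0"
    using complex_words_common_isotropic_vector[OF sU UV ndU nzU HU Hc scalar] by force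
  have vV: "v \<in> V" using v UV by auto
  have "good_vector v H" unfolding good_vector_def
  proof
    fix xs assume xs: "xs \<in> H"
    have xW: "is_word xs" using HU xs by auto
    obtain ys s where ys: "ys \<in> sorted_words" "is_sign s" "\<forall>u\<in>V. word_op J xs u = s *\<^sub>R word_op J ys u"
      using word_op_normal_form[OF xW] by blast
    have yW: "is_word ys" using ys(1) by (simp add: sorted_words_def)
    have "g (word_op J ys v) v = 0 \<or> involution_word xs"
      using sign_multiple_word_cases[OF xs xW yW ys(2,3)] iso ys(1) vV by blast
    then show "(\<exists>s. is_sign s \<and> word_op J xs v = s *\<^sub>R v) \<or> g (word_op J xs v) v = 0"
    proof
      assume "g (word_op J ys v) v = 0"
      then show ?thesis using ys(3) vV by (simp add: g_simps)
    next
      assume "involution_word xs"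
      then have "word_op J xs v = 1 *\<^sub>R v \<or> word_op J xs v = (-1) *\<^sub>R v"
        using scalar xs v(1) by auto
      then show ?thesis using is_sign_1 is_sign_m1 by blast
    qed
  qed
  then show ?thesis using v by blast
qed

definition fixed_space :: "nat list \<Rightarrow> 'a set \<Rightarrow> 'a set" where
  "fixed_space P U = {w\<in>U. word_op J P w = w}"

definition commutant :: "nat list \<Rightarrow> nat list set \<Rightarrow> nat list set" where
  "commutant P H = {ys\<in>H. \<forall>u\<in>V. word_op J ys (word_op J P u) = word_op J P (word_op J ys u)}"

lemma subspace_fixed_space:
  assumes sU: "subspace U" and UV: "U \<subseteq> V" and P: "is_word P"
  shows "subspace (fixed_space P U)"
  unfolding subspace_def
proof (intro conjI ballI allI)
  show "0 \<in> fixed_space P U" using sU word_op_zero[OF P] by (simp add: fixed_space_def subspace_0)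
next
  fix x y assume "x \<in> fixed_space P U" "y \<in> fixed_space P U"
  then show "x + y \<in> fixed_space P U"
    using sU UV word_op_add[OF P, of x y] by (auto simp: fixed_space_def subspace_add subset_iff)
next
  fix c x assume "x \<in> fixed_space P U"
  then show "c *\<^sub>R x \<in> fixed_space P U"
    using sU UV word_op_scale[OF P, of x c] by (auto simp: fixed_space_def subspace_scale subset_iff)
qed

text \<open>\<open>w + P w\<close> is the projection onto the fixed space, up to a factor 2.\<close>

lemma plus_involution_fixed:
  assumes sU: "subspace U" and UV: "U \<subseteq> V" and P: "is_word P" "involution_word P"
    and PU: "\<forall>w\<in>U. word_op J P w \<in> U" and w: "w \<in> U"
  shows "w + word_op J P w \<in> fixed_space P U"
proof -
  have wV: "w \<in> V" using w UV by auto
  then show ?thesis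
    using sU w PU P(2) word_op_in[OF P(1) wV]
    by (auto simp: fixed_space_def word_op_add[OF P(1)] subspace_add add.commute)
qed

lemma fixed_space_nondegenerate:
  assumes sU: "subspace U" and UV: "U \<subseteq> V" and ndU: "nondegenerate_on U"
    and P: "is_word P" "involution_word P" and PU: "\<forall>w\<in>U. word_op J P w \<in> U"
  shows "nondegenerate_on (fixed_space P U)"
proof (intro ballI impI)
  fix x assume x: "x \<in> fixed_space P U" and z: "\<forall>y\<in>fixed_space P U. g x y = 0"
  have xU: "x \<in> U" and Px: "word_op J P x = x" using x by (auto simp: fixed_space_def)
  have "g x w = 0" if w: "w \<in> U" for w
  proof -
    have "g x (w + word_op J P w) = 0" using z plus_involution_fixed[OF sU UV P PU w] by blast
    moreover have "g x (word_op J P w) = g x w"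
      using P(2) xU w UV Px unfolding self_adjoint_word_def by (metis subsetD)
    ultimately show ?thesis by (simp add: g_simps)
  qed
  then show "x = 0" using ndU xU by blast
qed

lemma commutant_word_invariant:
  assumes "word_invariant H U" "U \<subseteq> V"
  shows "word_invariant (commutant P H) (fixed_space P U)"
  using assms by (fastforce simp: commutant_def fixed_space_def)

lemma append_closed_commutant:
  assumes HW: "\<forall>xs\<in>H. is_word xs" and Hc: "append_closed H"
  shows "append_closed (commutant P H)"
proof (intro ballI)
  fix xs ys assume xs: "xs \<in> commutant P H" and ys: "ys \<in> commutant P H"
  have "word_op J (xs @ ys) (word_op J P u) = word_op J P (word_op J (xs @ ys) u)" if u: "u \<in> V" for u
  proof -
    have yW: "is_word ys" using ys HW by (auto simp: commutant_def)
    have "word_op J (xs @ ys) (word_op J P u) = word_op J xs (word_op J P (word_op J ys u))"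
      using ys u by (simp add: word_op_append commutant_def)
    also have "\<dots> = word_op J P (word_op J (xs @ ys) u)"
      using xs word_op_in[OF yW u] by (simp add: commutant_def word_op_append)
    finally show ?thesis .
  qed
  then show "xs @ ys \<in> commutant P H" using xs ys Hc by (simp add: commutant_def)
qed

text \<open>A word anticommuting with \<open>P\<close> maps the \<open>+1\<close>-eigenvector \<open>v\<close> into the \<open>-1\<close>-eigenspace,
  which is orthogonal to \<open>v\<close>.\<close>

lemma good_vector_of_commutant:
  assumes v: "v \<in> V" "word_op J P v = v" and P: "is_word P" "self_adjoint_word P"
    and HW: "\<forall>xs\<in>H. is_word xs" and good: "good_vector v (commutant P H)"
  shows "good_vector v H"
  unfolding good_vector_def
proof
  fix xs assume xs: "xs \<in> H"
  have xW: "is_word xs" using xs HW by auto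
  obtain s where s: "is_sign s"
    "\<forall>u\<in>V. word_op J xs (word_op J P u) = s *\<^sub>R word_op J P (word_op J xs u)"
    using word_op_commute[OF xW P(1)] by blast
  show "(\<exists>s. is_sign s \<and> word_op J xs v = s *\<^sub>R v) \<or> g (word_op J xs v) v = 0"
  proof (cases "s = 1")
    case True
    then have "xs \<in> commutant P H" using xs s by (simp add: commutant_def)
    then show ?thesis using good by (simp add: good_vector_def)
  next
    case False
    then have "s = -1" using s(1) by (simp add: is_sign_def)
    then have "word_op J xs v = - word_op J P (word_op J xs v)" using s(2) v by force
    then have PX: "word_op J P (word_op J xs v) = - word_op J xs v" by (metis minus_minus)
    have "g (word_op J xs v) v = g (word_op J xs v) (word_op J P v)" using v(2) by simp
    also have "\<dots> = g (word_op J P (word_op J xs v)) v"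
      using P(2) word_op_in[OF xW v(1)] v(1) unfolding self_adjoint_word_def by metis
    also have "\<dots> = - g (word_op J xs v) v" using PX by (simp add: g_simps)
    finally show ?thesis by simp
  qed
qed

lemma good_vector_exists:
  assumes "subspace U" "U \<subseteq> V" "nondegenerate_on U" "\<exists>w\<in>U. w \<noteq> 0"
    and "word_invariant H U" "append_closed H"
  shows "\<exists>v\<in>U. g v v \<noteq> 0 \<and> good_vector v H"
  using assms
proof (induction "real_vector.dim U" arbitrary: U H rule: less_induct)
  case (less U H)
  note sU = less.prems(1) and UV = less.prems(2) and ndU = less.prems(3)
    and nzU = less.prems(4) and HU = less.prems(5) and Hc = less.prems(6)
  have HW: "\<forall>xs\<in>H. is_word xs" using HU by blast
  show ?case
  proof (cases "\<exists>P\<in>H. involution_word P \<and>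
                  \<not> (\<forall>w\<in>U. word_op J P w = w) \<and> \<not> (\<forall>w\<in>U. word_op J P w = - w)")
    case True
    then obtain P w1 w2 where P: "P \<in> H" "involution_word P"
      and w1: "w1 \<in> U" "word_op J P w1 \<noteq> w1" and w2: "w2 \<in> U" "word_op J P w2 \<noteq> - w2"
      by blast
    have PW: "is_word P" and PU: "\<forall>w\<in>U. word_op J P w \<in> U" using HU P(1) by auto
    have sE: "subspace (fixed_space P U)" using subspace_fixed_space[OF sU UV PW] .
    have EU: "fixed_space P U \<subseteq> U" by (auto simp: fixed_space_def)
    have "real_vector.dim (fixed_space P U) < real_vector.dim U"
      using dim_strict_subspace[OF sE sU EU w1(1)] w1(2) by (auto simp: fixed_space_def)
    moreover have "\<exists>w\<in>fixed_space P U. w \<noteq> 0"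
      using plus_involution_fixed[OF sU UV PW P(2) PU w2(1)] w2(2)
      by (metis add.commute add_eq_0_iff)
    ultimately obtain v where v: "v \<in> fixed_space P U" "g v v \<noteq> 0" "good_vector v (commutant P H)"
      using less.hyps[OF _ sE _ fixed_space_nondegenerate[OF sU UV ndU PW P(2) PU] _
          commutant_word_invariant[OF HU UV] append_closed_commutant[OF HW Hc]] EU UV
      by blast
    then have "good_vector v H"
      using good_vector_of_commutant[OF _ _ PW _ HW] UV P(2) by (auto simp: fixed_space_def)
    then show ?thesis using v EU by blast
  next
    case False
    then show ?thesis using good_vector_if_involutions_scalar[OF sU UV ndU nzU HU Hc] by blast
  qed
qed

definition J_closed :: "'a set \<Rightarrow> bool" where
  "J_closed T \<longleftrightarrow> (\<forall>k<n. \<forall>t\<in>T. \<exists>t'\<in>T. J k t = t' \<or> J k t = - t')"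

definition V_perp :: "'a set \<Rightarrow> 'a set" where
  "V_perp T = {w\<in>V. \<forall>t\<in>T. g w t = 0}"

lemma V_perp_subset: "V_perp T \<subseteq> V"
  by (auto simp: V_perp_def)

lemma subspace_V_perp: "subspace (V_perp T)"
  unfolding subspace_def V_perp_def by (auto simp: g_simps zero_in_V intro: add_in_V scale_in_V)

lemma V_perp_projection:
  assumes T: "T \<subseteq> V" "orthonormal_set g T" and u: "u \<in> V"
  shows "u - (\<Sum>t\<in>T. (g u t / g t t) *\<^sub>R t) \<in> V_perp T"
proof -
  have fT: "finite T" using orthonormal_set_finite[OF T(2)] by simp
  have "(\<Sum>t\<in>T. (g u t / g t t) *\<^sub>R t) \<in> V"
    using T(1) by (intro subspace_sum[OF subspace_V] scale_in_V) auto
  then have "u - (\<Sum>t\<in>T. (g u t / g t t) *\<^sub>R t) \<in> V" using u by (rule diff_in_V[rotated])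
  moreover have "g (u - (\<Sum>t\<in>T. (g u t / g t t) *\<^sub>R t)) t' = 0" if t': "t' \<in> T" for t'
  proof -
    have "g t' t' \<noteq> 0" using T(2) t' by (auto simp: orthonormal_set_def)
    then show ?thesis
      using orthonormal_set_sum[OF bilinear_g fT T(2) t', of "\<lambda>t. g u t / g t t"] by (simp add: g_simps)
  qed
  ultimately show ?thesis by (simp add: V_perp_def)
qed

lemma V_perp_nondegenerate:
  assumes T: "T \<subseteq> V" "orthonormal_set g T"
  shows "nondegenerate_on (V_perp T)"
proof (intro ballI impI)
  fix w assume w: "w \<in> V_perp T" and z: "\<forall>y\<in>V_perp T. g w y = 0"
  have "g w u = 0" if u: "u \<in> V" for u
  proof -
    let ?s = "\<Sum>t\<in>T. (g u t / g t t) *\<^sub>R t"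
    have "g w (u - ?s) = 0" using z V_perp_projection[OF T u] by blast
    moreover have "g w ?s = 0"
      using w by (simp add: bilinear_sum_right[OF bilinear_g] g_simps V_perp_def g_sym)
    ultimately show "g w u = 0" by (simp add: g_simps)
  qed
  then show "w = 0" using nondegenerate_V w by (auto simp: V_perp_def)
qed

lemma V_perp_nonzero:
  assumes T: "T \<subseteq> V" "orthonormal_set g T" and x: "x \<in> V" "x \<notin> span T"
  shows "\<exists>w\<in>V_perp T. w \<noteq> 0"
proof
  let ?s = "\<Sum>t\<in>T. (g x t / g t t) *\<^sub>R t"
  show "x - ?s \<in> V_perp T" using V_perp_projection[OF T x(1)] .
  have "?s \<in> span T" by (intro real_vector.span_sum real_vector.span_scale real_vector.span_base)
  then show "x - ?s \<noteq> 0" using x(2) by auto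
qed

lemma V_perp_word_invariant:
  assumes T: "T \<subseteq> V" "J_closed T"
  shows "word_invariant {xs. is_word xs} (V_perp T)"
proof -
  have J_perp: "J k w \<in> V_perp T" if k: "k < n" and w: "w \<in> V_perp T" for k w
  proof -
    have wV: "w \<in> V" using w by (simp add: V_perp_def)
    have "g (J k w) t = 0" if t: "t \<in> T" for t
    proof -
      obtain t' where t': "t' \<in> T" "J k t = t' \<or> J k t = - t'"
        using T(2) k t by (auto simp: J_closed_def)
      have "g (J k w) t = - g w (J k t)" using J_skew[OF k wV] t T(1) by auto
      then show ?thesis using t' w by (auto simp: V_perp_def g_simps)
    qed
    then show ?thesis using J_in_V[OF k wV] by (simp add: V_perp_def)
  qed
  show ?thesis
  proof
    fix xs assume "xs \<in> {xs. is_word xs}"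
    then have xs: "is_word xs" by simp
    then have "\<forall>w\<in>V_perp T. word_op J xs w \<in> V_perp T" by (induct xs) (auto intro: J_perp)
    with xs show "is_word xs \<and> (\<forall>w\<in>V_perp T. word_op J xs w \<in> V_perp T)" by simp
  qed
qed

lemma good_unit_vector_exists:
  assumes sU: "subspace U" and UV: "U \<subseteq> V" and ndU: "nondegenerate_on U"
    and nzU: "\<exists>w\<in>U. w \<noteq> 0" and HU: "word_invariant {xs. is_word xs} U"
  shows "\<exists>v\<in>U. is_sign (g v v) \<and> good_vector v {xs. is_word xs}"
proof -
  have "append_closed {xs. is_word xs}" by simp
  then obtain v0 where v0: "v0 \<in> U" "g v0 v0 \<noteq> 0" "good_vector v0 {xs. is_word xs}"
    using good_vector_exists[OF sU UV ndU nzU HU] by blast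
  define c where "c = 1 / sqrt \<bar>g v0 v0\<bar>"
  have v0V: "v0 \<in> V" using v0(1) UV by auto
  have "g (c *\<^sub>R v0) (c *\<^sub>R v0) = g v0 v0 / \<bar>g v0 v0\<bar>"
    by (simp add: c_def g_simps power2_eq_square[symmetric])
  then have "is_sign (g (c *\<^sub>R v0) (c *\<^sub>R v0))" using v0(2) by (auto simp: is_sign_def abs_if)
  moreover have "good_vector (c *\<^sub>R v0) {xs. is_word xs}" unfolding good_vector_def
  proof
    fix xs assume "xs \<in> {xs. is_word xs}"
    then have xs: "is_word xs" by simp
    have e: "word_op J xs (c *\<^sub>R v0) = c *\<^sub>R word_op J xs v0" using word_op_scale[OF xs v0V] .
    from v0(3) xs consider s where "is_sign s" "word_op J xs v0 = s *\<^sub>R v0"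
      | "g (word_op J xs v0) v0 = 0" unfolding good_vector_def by blast
    then show "(\<exists>s. is_sign s \<and> word_op J xs (c *\<^sub>R v0) = s *\<^sub>R c *\<^sub>R v0) \<or>
               g (word_op J xs (c *\<^sub>R v0)) (c *\<^sub>R v0) = 0"
    proof cases
      case 1
      then show ?thesis using e by (metis scaleR_left_commute)
    next
      case 2
      then show ?thesis using e by (simp add: g_simps)
    qed
  qed
  ultimately show ?thesis using v0(1) sU by (meson subspace_scale)
qed

definition orbit :: "'a \<Rightarrow> 'a set" where
  "orbit v = (\<lambda>xs. word_op J xs v) ` {xs. is_word xs}"

lemma orbit_norm:
  assumes v: "v \<in> V" "is_sign (g v v)" and q: "q \<in> orbit v"
  shows "is_sign (g q q)"
proof -
  obtain xs where xs: "is_word xs" "q = word_op J xs v" using q by (auto simp: orbit_def)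
  obtain c where c: "is_sign c" "\<forall>u\<in>V. word_op J (rev xs) (word_op J xs u) = c *\<^sub>R u"
    using word_op_rev_inverse[OF xs(1)] by blast
  have "g q q = (-1)^length xs * g v (word_op J (rev xs) (word_op J xs v))"
    using word_op_adjoint[OF xs(1) v(1) word_op_in[OF xs(1) v(1)]] xs(2) by simp
  also have "\<dots> = ((-1)^length xs * c) * g v v" using c v(1) by (simp add: g_simps)
  finally show ?thesis using is_sign_mult[OF is_sign_mult[OF is_sign_pow c(1)] v(2)] by simp
qed

text \<open>Two orbit points \<open>J\<^sub>x v\<close>, \<open>J\<^sub>y v\<close> are compared through the single word \<open>rev x @ y\<close>
  applied to \<open>v\<close>, which is where goodness of \<open>v\<close> enters.\<close>

lemma orbit_trichotomy:
  assumes v: "v \<in> V" "good_vector v {xs. is_word xs}" and q: "q1 \<in> orbit v" "q2 \<in> orbit v"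
  shows "q2 = q1 \<or> q2 = - q1 \<or> g q1 q2 = 0"
proof -
  obtain xs ys where xs: "is_word xs" "q1 = word_op J xs v" and ys: "is_word ys" "q2 = word_op J ys v"
    using q by (auto simp: orbit_def)
  have q2V: "q2 \<in> V" using ys word_op_in v(1) by simp
  have "(\<exists>s. is_sign s \<and> word_op J (rev xs @ ys) v = s *\<^sub>R v) \<or> g (word_op J (rev xs @ ys) v) v = 0"
    using v(2) xs(1) ys(1) by (simp add: good_vector_def)
  then show ?thesis
  proof
    assume "\<exists>s. is_sign s \<and> word_op J (rev xs @ ys) v = s *\<^sub>R v"
    then obtain s where s: "is_sign s" "word_op J (rev xs) q2 = s *\<^sub>R v"
      using ys by (auto simp: word_op_append)
    obtain c where c: "is_sign c" "\<forall>u\<in>V. word_op J (rev (rev xs)) (word_op J (rev xs) u) = c *\<^sub>R u"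
      using word_op_rev_inverse[of "rev xs"] xs(1) by auto
    have "c *\<^sub>R q2 = word_op J xs (word_op J (rev xs) q2)" using c q2V by simp
    also have "\<dots> = s *\<^sub>R q1" using s word_op_scale[OF xs(1) v(1)] xs(2) by simp
    finally have "q2 = (c * s) *\<^sub>R q1" using is_sign_inv[OF c(1)] by (metis scaleR_scaleR)
    then show ?thesis using is_sign_mult[OF c(1) s(1)] by (auto simp: is_sign_def)
  next
    assume z: "g (word_op J (rev xs @ ys) v) v = 0"
    have "g q1 q2 = (-1)^length xs * g v (word_op J (rev xs) q2)"
      using word_op_adjoint[OF xs(1) v(1) q2V] xs(2) by simp
    also have "g v (word_op J (rev xs) q2) = 0" using z ys g_sym by (simp add: word_op_append)
    finally show ?thesis by simp
  qed
qed

lemma J_orbit: "k < n \<Longrightarrow> q \<in> orbit v \<Longrightarrow> J k q \<in> orbit v"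
  unfolding orbit_def by (auto intro!: image_eqI[of _ _ "_ # _"])

lemma orbit_representatives_J_closed:
  assumes "v \<in> V"
  shows "J_closed (sign_representatives (orbit v))"
  unfolding J_closed_def
proof (intro allI impI ballI)
  fix k p assume k: "k < n" and p: "p \<in> sign_representatives (orbit v)"
  obtain q where q: "q \<in> orbit v" "p = q \<or> p = - q" using sign_representatives_cases[OF p] by blast
  have qV: "q \<in> V" using q(1) assms by (auto simp: orbit_def word_op_in)
  obtain p' where p': "p' \<in> sign_representatives (orbit v)" "J k q = p' \<or> J k q = - p'"
    using sign_representatives_cover[OF J_orbit[OF k q(1)]] by blast
  have "J k p = J k q \<or> J k p = - J k q" using q(2) J_neg[OF k qV] by auto
  then show "\<exists>t'\<in>sign_representatives (orbit v). J k p = t' \<or> J k p = - t'" using p' by auto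
qed

lemma extend_orthonormal_J_closed:
  assumes T: "T \<subseteq> V" "orthonormal_set g T" "J_closed T" and x: "x \<in> V" "x \<notin> span T"
  shows "\<exists>T'. T \<subset> T' \<and> T' \<subseteq> V \<and> orthonormal_set g T' \<and> J_closed T'"
proof -
  obtain v where v: "v \<in> V_perp T" "is_sign (g v v)" "good_vector v {xs. is_word xs}"
    using good_unit_vector_exists[OF subspace_V_perp V_perp_subset V_perp_nondegenerate[OF T(1,2)]
        V_perp_nonzero[OF T(1,2) x] V_perp_word_invariant[OF T(1,3)]] by blast
  have vV: "v \<in> V" using v(1) V_perp_subset by auto
  define T2 where "T2 = sign_representatives (orbit v)"
  have orbit_perp: "orbit v \<subseteq> V_perp T"
    using V_perp_word_invariant[OF T(1,3)] v(1) by (auto simp: orbit_def)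
  have T2_perp: "T2 \<subseteq> V_perp T"
    using sign_representatives_cases orbit_perp subspace_neg[OF subspace_V_perp] by (fastforce simp: T2_def)
  have oT2: "orthonormal_set g T2" unfolding T2_def
    using orbit_norm[OF vV v(2)] orbit_trichotomy[OF vV v(3)]
    by (intro sign_representatives_orthonormal[OF bilinear_g]) (auto simp: is_sign_def)
  have orth: "\<forall>a\<in>T2. \<forall>b\<in>T. g a b = 0" using T2_perp by (auto simp: V_perp_def)
  have "v \<in> orbit v" by (auto simp: orbit_def intro!: image_eqI[of _ _ "[]"])
  then have "T2 \<noteq> {}" using sign_representatives_cover unfolding T2_def by blast
  then have "T \<subset> T \<union> T2" using orthonormal_set_orthogonal_disjoint[OF oT2 orth] by blast
  moreover have "orthonormal_set g (T \<union> T2)"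
    using orthonormal_set_orthogonal_Un[OF g_sym oT2 T(2) orth] by (simp add: Un_commute)
  moreover have "J_closed (T \<union> T2)"
    using T(3) orbit_representatives_J_closed[OF vV] unfolding J_closed_def T2_def by blast
  moreover have "T \<union> T2 \<subseteq> V" using T(1) T2_perp V_perp_subset by blast
  ultimately show ?thesis by blast
qed

theorem J_closed_orthonormal_basis_exists:
  "\<exists>T. finite T \<and> T \<subseteq> V \<and> V \<subseteq> span T \<and> orthonormal_set g T \<and> J_closed T"
proof -
  define P where "P = (\<lambda>T. T \<subseteq> V \<and> orthonormal_set g T \<and> J_closed T)"
  have P0: "P {}" by (simp add: P_def orthonormal_set_def J_closed_def)
  have bound: "\<forall>T. P T \<longrightarrow> card T < Suc (card Bs)"
    using orthonormal_set_finite by (auto simp: P_def less_Suc_eq_le)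
  obtain T where T: "P T" "\<forall>T'. P T' \<longrightarrow> card T' \<le> card T"
    using ex_has_greatest_nat[OF P0 bound] by blast
  have "V \<subseteq> span T"
  proof
    fix x assume x: "x \<in> V"
    show "x \<in> span T"
    proof (rule ccontr)
      assume "x \<notin> span T"
      then have "\<exists>T'. T \<subset> T' \<and> P T'"
        using extend_orthonormal_J_closed[of T x] T(1) x by (simp add: P_def)
      then obtain T' where T': "T \<subset> T'" "P T'" by blast
      then have "card T < card T'" using orthonormal_set_finite by (auto simp: P_def psubset_card_mono)
      then show False using T(2) T'(2) by fastforce
    qed
  qed
  then show ?thesis using T(1) orthonormal_set_finite by (auto simp: P_def)
qed

end

locale H_type_algebra =
  fixes br :: "'a::real_vector \<Rightarrow> 'a \<Rightarrow> 'a" and g :: "'a \<Rightarrow> 'a \<Rightarrow> real"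
  assumes H_type: "general_H_type br g"
begin

abbreviation Z :: "'a set" where "Z \<equiv> lie_center br"
abbreviation V :: "'a set" where "V \<equiv> orth_compl g Z"

lemma finite_spanning_set: "\<exists>B :: 'a set. finite B \<and> span B = UNIV"
  using H_type unfolding general_H_type_def by (elim conjE)

lemma scalar_product_g: "scalar_product g"
  using H_type unfolding general_H_type_def by (elim conjE)

lemma lie_bracket_br: "lie_bracket br"
  using H_type unfolding general_H_type_def by (elim conjE)

lemma two_step_nilpotent_br: "two_step_nilpotent br"
  using H_type unfolding general_H_type_def by (elim conjE)

lemma bilinear_g: "bilinear g"
  using scalar_product_g by (simp add: scalar_product_def)

lemma g_sym: "g x y = g y x"
  using scalar_product_g by (simp add: scalar_product_def)

lemma g_nondegenerate: "(\<forall>y. g x y = 0) \<Longrightarrow> x = 0"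
  using scalar_product_g by (simp add: scalar_product_def)

lemmas g_simps = bilinear_ladd[OF bilinear_g] bilinear_radd[OF bilinear_g]
  bilinear_lmul[OF bilinear_g, simplified] bilinear_rmul[OF bilinear_g, simplified]
  bilinear_lneg[OF bilinear_g] bilinear_rneg[OF bilinear_g]
  bilinear_lsub[OF bilinear_g] bilinear_rsub[OF bilinear_g]
  bilinear_lzero[OF bilinear_g] bilinear_rzero[OF bilinear_g]

lemma bilinear_br: "bilinear br"
  using lie_bracket_br by (simp add: lie_bracket_def)

lemma br_self: "br x x = 0"
  using lie_bracket_br by (simp add: lie_bracket_def)

lemma br_antisym: "br x y = - br y x"
proof -
  have "0 = br (x + y) (x + y)" by (rule br_self[symmetric])
  also have "\<dots> = br x y + br y x"
    by (simp only: bilinear_ladd[OF bilinear_br] bilinear_radd[OF bilinear_br] br_self[of x]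
        br_self[of y] add_0_left add_0_right add.commute)
  finally have "br x y + br y x = 0" by (rule sym)
  then show ?thesis by (simp add: eq_neg_iff_add_eq_0)
qed

lemma br_in_center: "br x y \<in> Z"
proof -
  have "br w (br x y) = 0" for w
    using two_step_nilpotent_br unfolding two_step_nilpotent_def by blast
  then show ?thesis using br_antisym[of "br x y"] by (simp add: lie_center_def)
qed

lemma subspace_Z: "subspace Z"
  unfolding subspace_def lie_center_def
  by (auto simp: bilinear_ladd[OF bilinear_br] bilinear_lmul[OF bilinear_br]
      bilinear_lzero[OF bilinear_br])

lemma subspace_V: "subspace V"
  unfolding subspace_def orth_compl_def by (auto simp: g_simps)

lemma V_orthogonal_Z: "v \<in> V \<Longrightarrow> z \<in> Z \<Longrightarrow> g v z = 0"
  by (auto simp: orth_compl_def)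

lemma H_type_conditions:
  "(\<forall>z\<in>Z. (\<forall>w\<in>Z. g z w = 0) \<longrightarrow> z = 0) \<and> (\<forall>x. \<exists>v\<in>V. \<exists>z\<in>Z. x = v + z) \<and>
   (\<exists>J. (\<forall>z\<in>Z. \<forall>u\<in>V. J z u \<in> V \<and> (\<forall>v\<in>V. g (J z u) v = g z (br u v))) \<and>
        (\<forall>z\<in>Z. \<forall>u\<in>V. \<forall>v\<in>V. g (J z u) (J z v) = g z z * g u v))"
proof -
  have "let Z = lie_center br; V = orth_compl g Z in
          (\<forall>z\<in>Z. (\<forall>w\<in>Z. g z w = 0) \<longrightarrow> z = 0) \<and>
          (\<forall>x. \<exists>v\<in>V. \<exists>z\<in>Z. x = v + z) \<and>
          (\<exists>J. (\<forall>z\<in>Z. \<forall>u\<in>V. J z u \<in> V \<and> (\<forall>v\<in>V. g (J z u) v = g z (br u v))) \<and>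
               (\<forall>z\<in>Z. \<forall>u\<in>V. \<forall>v\<in>V. g (J z u) (J z v) = g z z * g u v))"
    using H_type unfolding general_H_type_def by (elim conjE)
  then show ?thesis unfolding Let_def .
qed

lemma Z_nondegenerate: "z \<in> Z \<Longrightarrow> \<forall>w\<in>Z. g z w = 0 \<Longrightarrow> z = 0"
  using H_type_conditions by blast

lemma V_plus_Z: "\<exists>v\<in>V. \<exists>z\<in>Z. x = v + z"
  using H_type_conditions by blast

lemma V_nondegenerate:
  assumes "x \<in> V" "\<forall>y\<in>V. g x y = 0"
  shows "x = 0"
proof (rule g_nondegenerate, rule allI)
  fix y
  obtain v z where "v \<in> V" "z \<in> Z" "y = v + z" using V_plus_Z by blast
  then show "g x y = 0" using assms V_orthogonal_Z by (simp add: g_simps)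
qed

lemma V_eqI:
  assumes "x \<in> V" "y \<in> V" "\<And>w. w \<in> V \<Longrightarrow> g x w = g y w"
  shows "x = y"
  using V_nondegenerate[of "x - y"] assms subspace_diff[OF subspace_V] by (simp add: g_simps)

definition Jmap :: "'a \<Rightarrow> 'a \<Rightarrow> 'a" where
  "Jmap = (SOME J. (\<forall>z\<in>Z. \<forall>u\<in>V. J z u \<in> V \<and> (\<forall>v\<in>V. g (J z u) v = g z (br u v))) \<and>
                   (\<forall>z\<in>Z. \<forall>u\<in>V. \<forall>v\<in>V. g (J z u) (J z v) = g z z * g u v))"

lemma Jmap_spec:
  "(\<forall>z\<in>Z. \<forall>u\<in>V. Jmap z u \<in> V \<and> (\<forall>v\<in>V. g (Jmap z u) v = g z (br u v))) \<and>
   (\<forall>z\<in>Z. \<forall>u\<in>V. \<forall>v\<in>V. g (Jmap z u) (Jmap z v) = g z z * g u v)"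
  unfolding Jmap_def by (rule someI_ex[OF H_type_conditions[THEN conjunct2, THEN conjunct2]])

lemma Jmap_in_V: "z \<in> Z \<Longrightarrow> u \<in> V \<Longrightarrow> Jmap z u \<in> V"
  and Jmap_pairing: "z \<in> Z \<Longrightarrow> u \<in> V \<Longrightarrow> w \<in> V \<Longrightarrow> g (Jmap z u) w = g z (br u w)"
  and Jmap_isometry: "z \<in> Z \<Longrightarrow> u \<in> V \<Longrightarrow> w \<in> V \<Longrightarrow> g (Jmap z u) (Jmap z w) = g z z * g u w"
  using Jmap_spec by blast+

lemma Jmap_add:
  assumes "z \<in> Z" "u \<in> V" "w \<in> V"
  shows "Jmap z (u + w) = Jmap z u + Jmap z w"
proof (rule V_eqI)
  fix v assume "v \<in> V"
  with assms show "g (Jmap z (u + w)) v = g (Jmap z u + Jmap z w) v"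
    by (simp add: Jmap_pairing g_simps bilinear_ladd[OF bilinear_br] subspace_add[OF subspace_V])
qed (use assms in \<open>simp_all add: Jmap_in_V subspace_add[OF subspace_V]\<close>)

lemma Jmap_scale:
  assumes "z \<in> Z" "u \<in> V"
  shows "Jmap z (c *\<^sub>R u) = c *\<^sub>R Jmap z u"
proof (rule V_eqI)
  fix v assume "v \<in> V"
  with assms show "g (Jmap z (c *\<^sub>R u)) v = g (c *\<^sub>R Jmap z u) v"
    by (simp add: Jmap_pairing g_simps bilinear_lmul[OF bilinear_br] subspace_scale[OF subspace_V])
qed (use assms in \<open>simp_all add: Jmap_in_V subspace_scale[OF subspace_V]\<close>)

lemma Jmap_add_center:
  assumes "z \<in> Z" "z' \<in> Z" "u \<in> V"
  shows "Jmap (z + z') u = Jmap z u + Jmap z' u"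
proof (rule V_eqI)
  fix v assume "v \<in> V"
  with assms show "g (Jmap (z + z') u) v = g (Jmap z u + Jmap z' u) v"
    by (simp add: Jmap_pairing g_simps subspace_add[OF subspace_Z])
qed (use assms in \<open>simp_all add: Jmap_in_V subspace_add[OF subspace_V] subspace_add[OF subspace_Z]\<close>)

lemma Jmap_skew:
  assumes "z \<in> Z" "u \<in> V" "w \<in> V"
  shows "g (Jmap z u) w = - g u (Jmap z w)"
proof -
  have "g (Jmap z u) w = g z (br u w)" using assms by (rule Jmap_pairing)
  also have "\<dots> = - g z (br w u)" by (subst br_antisym) (simp add: g_simps)
  also have "g z (br w u) = g (Jmap z w) u" using assms by (simp add: Jmap_pairing)
  also have "\<dots> = g u (Jmap z w)" by (rule g_sym)
  finally show ?thesis .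
qed

lemma Jmap_square:
  assumes "z \<in> Z" "u \<in> V"
  shows "Jmap z (Jmap z u) = (- g z z) *\<^sub>R u"
proof (rule V_eqI)
  fix w assume w: "w \<in> V"
  have "g (Jmap z (Jmap z u)) w = - g (Jmap z u) (Jmap z w)"
    using assms w by (simp add: Jmap_skew Jmap_in_V)
  also have "\<dots> = g ((- g z z) *\<^sub>R u) w"
    using assms w by (simp add: Jmap_isometry g_simps)
  finally show "g (Jmap z (Jmap z u)) w = g ((- g z z) *\<^sub>R u) w" .
qed (use assms in \<open>simp_all add: Jmap_in_V subspace_scale[OF subspace_V] subspace_neg[OF subspace_V]\<close>)

text \<open>Polarising the isometry identity at \<open>z + z'\<close> gives the anticommutation relation.\<close>

lemma Jmap_anticommute:
  assumes z: "z \<in> Z" and z': "z' \<in> Z" and orth: "g z z' = 0" and u: "u \<in> V"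
  shows "Jmap z (Jmap z' u) = - Jmap z' (Jmap z u)"
proof (rule V_eqI)
  fix w assume w: "w \<in> V"
  have "g (Jmap (z + z') u) (Jmap (z + z') w) = g (z + z') (z + z') * g u w"
    using subspace_add[OF subspace_Z z z'] u w by (rule Jmap_isometry)
  moreover have "g (z + z') (z + z') = g z z + g z' z'"
    using orth g_sym[of z' z] by (simp add: g_simps)
  ultimately have "g (Jmap z u) (Jmap z' w) + g (Jmap z' u) (Jmap z w) = 0"
    using z z' u w orth g_sym[of z' z] by (simp add: Jmap_add_center Jmap_isometry Jmap_in_V g_simps algebra_simps)
  moreover have "g (Jmap z (Jmap z' u)) w = - g (Jmap z' u) (Jmap z w)"
    and "g (Jmap z' (Jmap z u)) w = - g (Jmap z u) (Jmap z' w)"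
    using z z' u w by (simp_all add: Jmap_skew Jmap_in_V)
  ultimately show "g (Jmap z (Jmap z' u)) w = g (- Jmap z' (Jmap z u)) w"
    by (simp add: g_simps)
qed (use assms in \<open>simp_all add: Jmap_in_V subspace_neg[OF subspace_V]\<close>)

lemma clifford_module_Jmap:
  assumes "finite B" "span B = UNIV"
    and zs: "set zs \<subseteq> Z" "orthonormal_set g (set zs)" "distinct zs"
  shows "clifford_module g V (length zs) (\<lambda>k. Jmap (zs ! k)) (\<lambda>k. g (zs ! k) (zs ! k)) B"
proof
  have zs_Z: "k < length zs \<Longrightarrow> zs ! k \<in> Z" for k using zs(1) by auto
  have zs_orth: "g (zs ! k) (zs ! l) = 0" if "k < length zs" "l < length zs" "k \<noteq> l" for k l
    using zs(2,3) that nth_mem by (simp add: orthonormal_set_def nth_eq_iff_index_eq)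
  show "finite B" "span B = UNIV" by (fact assms)+
  show "bilinear g" by (fact bilinear_g)
  show "\<And>x y. g x y = g y x" by (rule g_sym)
  show "subspace V" by (fact subspace_V)
  show "\<And>x. x \<in> V \<Longrightarrow> \<forall>y\<in>V. g x y = 0 \<Longrightarrow> x = 0" by (rule V_nondegenerate)
  show "\<And>k u. k < length zs \<Longrightarrow> u \<in> V \<Longrightarrow> Jmap (zs ! k) u \<in> V"
    and "\<And>k u w. k < length zs \<Longrightarrow> u \<in> V \<Longrightarrow> w \<in> V \<Longrightarrow>
           Jmap (zs ! k) (u + w) = Jmap (zs ! k) u + Jmap (zs ! k) w"
    and "\<And>k u c. k < length zs \<Longrightarrow> u \<in> V \<Longrightarrow> Jmap (zs ! k) (c *\<^sub>R u) = c *\<^sub>R Jmap (zs ! k) u"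
    and "\<And>k u w. k < length zs \<Longrightarrow> u \<in> V \<Longrightarrow> w \<in> V \<Longrightarrow>
           g (Jmap (zs ! k) u) w = - g u (Jmap (zs ! k) w)"
    and "\<And>k u. k < length zs \<Longrightarrow> u \<in> V \<Longrightarrow>
           Jmap (zs ! k) (Jmap (zs ! k) u) = (- g (zs ! k) (zs ! k)) *\<^sub>R u"
    by (simp_all add: zs_Z Jmap_in_V Jmap_add Jmap_scale Jmap_skew Jmap_square)
  show "\<And>k l u. k < length zs \<Longrightarrow> l < length zs \<Longrightarrow> k \<noteq> l \<Longrightarrow> u \<in> V \<Longrightarrow>
          Jmap (zs ! k) (Jmap (zs ! l) u) = - Jmap (zs ! l) (Jmap (zs ! k) u)"
    by (rule Jmap_anticommute) (simp_all add: zs_Z zs_orth)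
  show "\<And>k. k < length zs \<Longrightarrow> is_sign (g (zs ! k) (zs ! k))"
    using zs(2) by (simp add: orthonormal_set_def is_sign_def)
qed

text \<open>With no operators, the Clifford module result is just the existence of an orthonormal basis.\<close>

lemma center_orthonormal_basis:
  fixes B :: "'a set"
  assumes "finite B" "span B = UNIV"
  obtains zs where "distinct zs" "set zs \<subseteq> Z" "Z \<subseteq> span (set zs)" "orthonormal_set g (set zs)"
proof -
  interpret clifford_module g Z 0 "\<lambda>k u. u" "\<lambda>k. 1" B
  proof
    show "finite B" "span B = UNIV" by (fact assms)+
    show "bilinear g" by (fact bilinear_g)
    show "\<And>x y. g x y = g y x" by (rule g_sym)
    show "subspace Z" by (fact subspace_Z)
    show "\<And>x. x \<in> Z \<Longrightarrow> \<forall>y\<in>Z. g x y = 0 \<Longrightarrow> x = 0" by (rule Z_nondegenerate)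
  qed simp_all
  obtain T where T: "finite T" "T \<subseteq> Z" "Z \<subseteq> span T" "orthonormal_set g T"
    using J_closed_orthonormal_basis_exists by blast
  obtain zs where "set zs = T" "distinct zs" using finite_distinct_list[OF T(1)] by blast
  with T that show ?thesis by blast
qed

lemma bracket_coefficient_sign:
  assumes z: "z \<in> Z" "g z z = 1 \<or> g z z = -1"
    and T: "orthonormal_set g T" "T \<subseteq> V" and u: "u \<in> T" and w: "w \<in> T"
    and closed: "\<exists>t\<in>T. Jmap z u = t \<or> Jmap z u = - t"
  shows "g (br u w) z / g z z = 1 \<or> g (br u w) z / g z z = -1 \<or> g (br u w) z / g z z = 0"
proof -
  obtain t where t: "t \<in> T" "Jmap z u = t \<or> Jmap z u = - t" using closed by blast
  have "g (br u w) z = g z (br u w)" by (rule g_sym)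
  also have "\<dots> = g (Jmap z u) w" by (rule Jmap_pairing[symmetric]) (use z u w T(2) in auto)
  finally have "g (br u w) z = g t w \<or> g (br u w) z = - g t w"
    using t(2) by (elim disjE) (simp_all add: g_simps)
  moreover have "g t w = 1 \<or> g t w = -1 \<or> g t w = 0"
    using T(1) t(1) w by (cases "t = w") (auto simp: orthonormal_set_def)
  ultimately have "g (br u w) z = 1 \<or> g (br u w) z = -1 \<or> g (br u w) z = 0" by auto
  with z(2) show ?thesis by (elim disjE) simp_all
qed

lemma adapted_orthonormal_lists:
  obtains vs zs where "distinct zs" "set zs \<subseteq> Z" "Z \<subseteq> span (set zs)" "orthonormal_set g (set zs)"
    and "distinct vs" "set vs \<subseteq> V" "V \<subseteq> span (set vs)" "orthonormal_set g (set vs)"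
    and "\<forall>k<length zs. \<forall>u\<in>set vs. \<exists>t\<in>set vs. Jmap (zs ! k) u = t \<or> Jmap (zs ! k) u = - t"
proof -
  obtain B :: "'a set" where B: "finite B" "span B = UNIV" using finite_spanning_set by blast
  obtain zs where zs: "distinct zs" "set zs \<subseteq> Z" "Z \<subseteq> span (set zs)" "orthonormal_set g (set zs)"
    using center_orthonormal_basis[OF B] by blast
  interpret cv: clifford_module g V "length zs" "\<lambda>k. Jmap (zs ! k)" "\<lambda>k. g (zs ! k) (zs ! k)" B
    using clifford_module_Jmap[OF B zs(2,4,1)] .
  obtain T where T: "finite T" "T \<subseteq> V" "V \<subseteq> span T" "orthonormal_set g T" "cv.J_closed T"
    using cv.J_closed_orthonormal_basis_exists by blast
  obtain vs where "set vs = T" "distinct vs" using finite_distinct_list[OF T(1)] by blast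
  with zs T show ?thesis using that by (auto simp: cv.J_closed_def)
qed

lemma orthonormal_basis_of_adapted_lists:
  assumes zs: "distinct zs" "set zs \<subseteq> Z" "Z \<subseteq> span (set zs)" "orthonormal_set g (set zs)"
    and vs: "distinct vs" "set vs \<subseteq> V" "V \<subseteq> span (set vs)" "orthonormal_set g (set vs)"
  shows "orthonormal_basis g (\<lambda>i. if i < length vs then vs ! i else zs ! (i - length vs))
           (length vs + length zs)"
proof (rule orthonormal_basis_append[OF bilinear_g])
  have orth: "\<forall>a\<in>set vs. \<forall>b\<in>set zs. g a b = 0" using vs(2) zs(2) V_orthogonal_Z by blast
  show "orthonormal_set g (set vs \<union> set zs)"
    using orthonormal_set_orthogonal_Un[OF g_sym vs(4) zs(4) orth] .
  show "distinct (vs @ zs)"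
    using vs(1) zs(1) orthonormal_set_orthogonal_disjoint[OF vs(4) orth] by simp
  have "x \<in> span (set vs \<union> set zs)" for x
  proof -
    obtain v z where vz: "v \<in> V" "z \<in> Z" "x = v + z" using V_plus_Z by blast
    have "v \<in> span (set vs \<union> set zs)" "z \<in> span (set vs \<union> set zs)"
      using vz vs(3) zs(3) real_vector.span_mono[of "set vs" "set vs \<union> set zs"]
        real_vector.span_mono[of "set zs" "set vs \<union> set zs"] by auto
    then show ?thesis using vz(3) by (simp add: real_vector.span_add)
  qed
  then show "span (set vs \<union> set zs) = UNIV" by auto
qed

lemma bracket_expansion:
  assumes "distinct zs" "Z \<subseteq> span (set zs)" "orthonormal_set g (set zs)"
  shows "br u w = (\<Sum>k<length zs. (g (br u w) (zs ! k) / g (zs ! k) (zs ! k)) *\<^sub>R zs ! k)"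
proof -
  have "br u w = (\<Sum>t\<in>set zs. (g (br u w) t / g t t) *\<^sub>R t)"
    using assms(2) br_in_center by (intro orthonormal_set_expansion[OF bilinear_g _ assms(3)]) auto
  also have "\<dots> = (\<Sum>k<length zs. (g (br u w) (zs ! k) / g (zs ! k) (zs ! k)) *\<^sub>R zs ! k)"
    by (rule sum.reindex_bij_betw[OF bij_betw_nth[OF assms(1) refl refl], symmetric])
  finally show ?thesis .
qed

end

theorem theorem1p2:
  fixes br :: "'a::real_vector \<Rightarrow> 'a \<Rightarrow> 'a" and g :: "'a \<Rightarrow> 'a \<Rightarrow> real"
  assumes "general_H_type br g"
  shows "\<exists>(m::nat) (n::nat) (v::nat \<Rightarrow> 'a) (z::nat \<Rightarrow> 'a) (A::nat \<Rightarrow> nat \<Rightarrow> nat \<Rightarrow> real).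
           orthonormal_basis g (\<lambda>i. if i < m then v i else z (i - m)) (m + n) \<and>
           (\<forall>\<alpha><m. v \<alpha> \<in> orth_compl g (lie_center br)) \<and>
           (\<forall>k<n. z k \<in> lie_center br) \<and>
           (\<forall>\<alpha><m. \<forall>\<beta><m. br (v \<alpha>) (v \<beta>) = (\<Sum>k<n. A k \<alpha> \<beta> *\<^sub>R z k)) \<and>
           (\<forall>\<alpha><m. \<forall>\<beta><m. \<forall>k<n. A k \<alpha> \<beta> = 1 \<or> A k \<alpha> \<beta> = -1 \<or> A k \<alpha> \<beta> = 0)"
proof -
  interpret H_type_algebra br g using assms by unfold_locales
  obtain vs zs where zs: "distinct zs" "set zs \<subseteq> Z" "Z \<subseteq> span (set zs)" "orthonormal_set g (set zs)"
    and vs: "distinct vs" "set vs \<subseteq> V" "V \<subseteq> span (set vs)" "orthonormal_set g (set vs)"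
    and closed: "\<forall>k<length zs. \<forall>u\<in>set vs. \<exists>t\<in>set vs. Jmap (zs ! k) u = t \<or> Jmap (zs ! k) u = - t"
    by (rule adapted_orthonormal_lists)
  define A where "A = (\<lambda>k \<alpha> \<beta>. g (br (vs ! \<alpha>) (vs ! \<beta>)) (zs ! k) / g (zs ! k) (zs ! k))"
  have "A k \<alpha> \<beta> = 1 \<or> A k \<alpha> \<beta> = -1 \<or> A k \<alpha> \<beta> = 0"
    if "\<alpha> < length vs" "\<beta> < length vs" "k < length zs" for k \<alpha> \<beta>
    unfolding A_def
  proof (rule bracket_coefficient_sign[OF _ _ vs(4,2)])
    show "zs ! k \<in> Z" "g (zs ! k) (zs ! k) = 1 \<or> g (zs ! k) (zs ! k) = -1"
      using zs(2,4) nth_mem[OF that(3)] by (auto simp: orthonormal_set_def)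
    show "vs ! \<alpha> \<in> set vs" "vs ! \<beta> \<in> set vs" using that(1,2) by simp_all
    then show "\<exists>t\<in>set vs. Jmap (zs ! k) (vs ! \<alpha>) = t \<or> Jmap (zs ! k) (vs ! \<alpha>) = - t"
      using closed that(3) by blast
  qed
  then show ?thesis
    using orthonormal_basis_of_adapted_lists[OF zs vs] bracket_expansion[OF zs(1,3,4)] vs(2) zs(2)
    by (intro exI[of _ "length vs"] exI[of _ "length zs"] exI[of _ "(!) vs"] exI[of _ "(!) zs"]
        exI[of _ A]) (auto simp: A_def)
qed

end
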